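(* Let $k\in\mathbb C$ with $\Re(k)<0$ and $\delta>0$. Let $f:\mathbb Q\to\mathbb C$ satisfy $f(x)=f(x+1)$ for $x\in\mathbb Q\setminus[-1,0]$, and let $h:\mathbb R\setminus\{0\}\to\mathbb C$ satisfy $h(x)=f(x)-|x|^{-k}f(-1/x)$ for $x\in\mathbb Q\cap([-1,1]\setminus\{0\})$, together with $$\sup_{\substack{x,y\in\mathbb R\setminus\{0\}\\ |x-y|<e^{-\varepsilon^{\delta-1}},\ |x|>2\varepsilon}}|h(x)-h(y)|=o(1)\quad(\varepsilon\to0^+),\qquad h(x)=O\big(e^{|x|^{\delta-1}}\big)\ \ (x\in[-1,1]\setminus\{0\}).$$ Then $f$ has property $\mathscr S(1+\delta)$.
   Context: For $x\in\mathbb R$ write $x=[b_0(x);b_1(x),\dots]$; $r(x)$ is the length of the minimal expansion for rational $x$, $r(x)=\infty$ otherwise. $\mathfrak T(B):=\{x\colon b_j(x)\leq\max(B,j(\log j)^2)\ \forall 1\leq j\leq r(x)\}$. For $x\in\mathfrak T(B)$, $V(B,m,x):=\{x'\in\mathbb Q\cap\mathfrak T(B)\colon r(x')\geq m,\ b_j(x')=b_j(x)\ \forall j\leq m\}$. Property $\mathscr S(\lambda)$: $\sup_{x\in\mathfrak T(m^\lambda)}\sup_{x',x''\in V(m^\lambda,m,x)}|f(x')-f(x'')|\to0$ as $m\to\infty$. *)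

theory Defs
  imports "HOL-Analysis.Analysis" "HOL-Library.Extended_Nat"
begin

fun cf_rem :: "real \<Rightarrow> nat \<Rightarrow> real" where
  "cf_rem x 0 = frac x"
| "cf_rem x (Suc j) = (if cf_rem x j = 0 then 0 else frac (1 / cf_rem x j))"

text \<open>b_j(x): b_0 = floor x, b_{j+1} = floor (1/t_j) (only meaningful for j+1 \<le> r(x)).\<close>
fun cf_digit :: "nat \<Rightarrow> real \<Rightarrow> int" where
  "cf_digit 0 x = \<lfloor>x\<rfloor>"
| "cf_digit (Suc j) x = \<lfloor>1 / cf_rem x j\<rfloor>"

text \<open>r(x): length of the (minimal) expansion; infinity if it never terminates.\<close>
definition cf_len :: "real \<Rightarrow> enat" where
  "cf_len x = (if \<exists>j. cf_rem x j = 0 then enat (LEAST j. cf_rem x j = 0) else \<infinity>)"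

definition cfT :: "real \<Rightarrow> real set" where
  "cfT B = {x. \<forall>j::nat. 1 \<le> j \<and> enat j \<le> cf_len x \<longrightarrow>
              real_of_int (cf_digit j x) \<le> max B (real j * (ln (real j))^2)}"

definition cfV :: "real \<Rightarrow> nat \<Rightarrow> real \<Rightarrow> real set" where
  "cfV B m x = {x'. x' \<in> \<rat> \<and> x' \<in> cfT B \<and> enat m \<le> cf_len x' \<and>
                    (\<forall>j\<le>m. cf_digit j x' = cf_digit j x)}"

text \<open>Property S(lambda): the supremum tends to 0 as m \<rightarrow> \<infinity>, written out with epsilons.\<close>
definition propS :: "real \<Rightarrow> (real \<Rightarrow> complex) \<Rightarrow> bool" where
  "propS lam f = (\<forall>e>0. \<forall>\<^sub>F m in sequentially.
      \<forall>x \<in> cfT (real m powr lam). \<forall>x' \<in> cfV (real m powr lam) m x. \<forall>x'' \<in> cfV (real m powr lam) m x.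
        norm (f x' - f x'') \<le> e)"

end

theory Submission
  imports Defs "HOL-Real_Asymp.Real_Asymp"
begin

text \<open>Write a non-integral rational \<open>x\<close> as \<open>sgn x \<cdot> |x|\<close> and follow the Gauss-map orbit
  \<open>t\<^sub>0, t\<^sub>1, \<dots>\<close> of \<open>|x|\<close>; for \<open>x < 0\<close> this is the expansion of \<open>-x\<close>, whose digits are those of
  \<open>x\<close> up to a shift at the beginning. Periodicity and the functional equation give
  \<open>f (\<plusminus>t\<^sub>j) = h (\<plusminus>t\<^sub>j) + t\<^sub>j\<^sup>-\<^sup>k f (\<mp>t\<^sub>j\<^sub>+\<^sub>1)\<close>, so \<open>f x\<close> is a sum of values of \<open>h\<close> weighted by
  products of \<open>t\<^sub>i\<^sup>-\<^sup>k\<close>. Since \<open>t\<^sub>j t\<^sub>j\<^sub>+\<^sub>1 \<le> 1/2\<close>, these weights decay geometrically, while the digit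
  bound \<open>m\<^sup>1\<^sup>+\<^sup>\<delta>\<close> keeps the \<open>t\<^sub>j\<close> away from \<open>0\<close>, so that the growth of \<open>h\<close> only contributes a
  subexponential factor. Two points with the same first \<open>m\<close> digits have remainders \<open>t\<^sub>j\<close> that
  agree up to \<open>2\<^sup>-\<^sup>(\<^sup>m\<^sup>-\<^sup>j\<^sup>)\<^sup>/\<^sup>2\<close>. Comparing the two sums over the first \<open>m/2\<close> steps, the values of
  \<open>h\<close> are close by the uniform continuity of \<open>h\<close> at scale \<open>exp (- \<epsilon>\<^sup>\<delta>\<^sup>-\<^sup>1)\<close> with
  \<open>\<epsilon> \<approx> m\<^sup>-\<^sup>1\<^sup>-\<^sup>\<delta>\<close>, the weights are close as well, and the remaining tails are exponentially
  small.\<close>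

section \<open>Continued fraction remainders\<close>

declare cf_rem.simps(2)[simp del] cf_digit.simps(2)[simp del]

lemma cf_rem_nonneg [simp]: "0 \<le> cf_rem x j"
  by (cases j) (auto simp: cf_rem.simps(2))

lemma cf_rem_less_1 [simp]: "cf_rem x j < 1"
  by (cases j) (auto simp: frac_lt_1 cf_rem.simps(2))

lemma cf_digit_Suc_ge_1:
  assumes "cf_rem x j \<noteq> 0"
  shows "1 \<le> cf_digit (Suc j) x"
proof -
  have "1 < 1 / cf_rem x j"
    using assms cf_rem_nonneg[of x j] cf_rem_less_1[of x j] by (simp add: less_le)
  then show ?thesis by (simp add: cf_digit.simps(2))
qed

lemma cf_rem_eq_inverse:
  assumes "cf_rem x j \<noteq> 0"
  shows "cf_rem x j = 1 / (cf_digit (Suc j) x + cf_rem x (Suc j))"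
  using assms by (simp add: frac_def cf_rem.simps(2) cf_digit.simps(2))

lemma cf_rem_ge_inverse_digit:
  assumes "cf_rem x j \<noteq> 0"
  shows "1 / (real_of_int (cf_digit (Suc j) x) + 1) \<le> cf_rem x j"
proof -
  have "1 / (real_of_int (cf_digit (Suc j) x) + 1) \<le> 1 / (cf_digit (Suc j) x + cf_rem x (Suc j))"
    using cf_digit_Suc_ge_1[OF assms] cf_rem_less_1[of x "Suc j"]
    by (intro divide_left_mono mult_pos_pos add_pos_nonneg) (auto intro: less_imp_le)
  then show ?thesis using cf_rem_eq_inverse[OF assms] by simp
qed

lemma cf_rem_mult_Suc_le_half: "cf_rem x j * cf_rem x (Suc j) \<le> 1 / 2"
proof (cases "cf_rem x j = 0")
  case False
  define b t where "b = real_of_int (cf_digit (Suc j) x)" and "t = cf_rem x (Suc j)"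
  have "1 \<le> b" "0 \<le> t" "t < 1"
    using cf_digit_Suc_ge_1[OF False] by (auto simp: b_def t_def)
  have "cf_rem x j * cf_rem x (Suc j) = t / (b + t)"
    using cf_rem_eq_inverse[OF False] by (simp add: b_def t_def)
  also have "\<dots> \<le> 1 / 2"
    using \<open>1 \<le> b\<close> \<open>0 \<le> t\<close> \<open>t < 1\<close> by (simp add: field_simps)
  finally show ?thesis .
qed simp

lemma cf_rem_frac_cong: "frac x = frac y \<Longrightarrow> cf_rem x j = cf_rem y j"
  by (induction j) (simp_all add: cf_rem.simps(2))

lemma cf_rem_Suc_eq_inverse_frac:
  assumes "frac x \<noteq> 0"
  shows "cf_rem x (Suc j) = cf_rem (1 / frac x) j"
  by (induction j) (use assms in \<open>simp_all add: cf_rem.simps(2)\<close>)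

lemma cf_rem_zero_mono: "cf_rem x j = 0 \<Longrightarrow> j \<le> i \<Longrightarrow> cf_rem x i = 0"
  by (induction i) (auto simp: le_Suc_eq cf_rem.simps(2))

lemma cf_rem_Rats: "x \<in> \<rat> \<Longrightarrow> cf_rem x j \<in> \<rat>"
  by (induction j) (auto simp: frac_def cf_rem.simps(2))

lemma frac_of_int_divide:
  assumes "q > 0"
  shows "frac (real_of_int p / real_of_int q) = real_of_int (p mod q) / real_of_int q"
proof -
  have "real_of_int p = real_of_int (p div q) * q + real_of_int (p mod q)"
    by (metis of_int_add of_int_mult div_mult_mod_eq)
  moreover have "frac (real_of_int p / real_of_int q) = real_of_int p / real_of_int q - real_of_int (p div q)"
    by (simp add: frac_def floor_divide_of_int_eq)
  ultimately show ?thesis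
    using assms by (simp add: field_simps)
qed

text \<open>The Euclidean algorithm: the denominator strictly decreases along the orbit.\<close>

lemma cf_rem_of_int_divide_eventually_zero:
  "\<exists>j. cf_rem (real_of_int p / real_of_int (int q)) j = 0"
proof (induction q arbitrary: p rule: less_induct)
  case (less q)
  show ?case
  proof (cases "frac (real_of_int p / real_of_int (int q)) = 0")
    case True
    then show ?thesis by (intro exI[of _ 0]) simp
  next
    case False
    then have "q > 0" by (cases q) auto
    define p' where "p' = p mod int q"
    have fr: "frac (real_of_int p / real_of_int (int q)) = real_of_int p' / real_of_int (int q)"
      using frac_of_int_divide[of "int q" p] \<open>q > 0\<close> by (simp add: p'_def)
    have "p' \<noteq> 0" using False fr by auto
    moreover have "0 \<le> p'" "p' < int q"
      using \<open>q > 0\<close> by (simp_all add: p'_def)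
    ultimately have "0 < p'" by simp
    then have "nat p' < q" using \<open>p' < int q\<close> by simp
    then obtain j where "cf_rem (real_of_int (int q) / real_of_int (int (nat p'))) j = 0"
      using less by blast
    then have "cf_rem (1 / frac (real_of_int p / real_of_int (int q))) j = 0"
      using fr \<open>0 < p'\<close> by simp
    then show ?thesis using cf_rem_Suc_eq_inverse_frac[OF False] by metis
  qed
qed

lemma cf_rem_Rats_obtain_length:
  assumes "x \<in> \<rat>"
  obtains n where "cf_rem x n = 0" "\<And>j. j < n \<Longrightarrow> cf_rem x j \<noteq> 0"
proof -
  obtain p q where "q > 0" "x = real_of_int p / real_of_int q"
    using assms by (metis Rats_cases' of_int_of_nat_eq zero_less_imp_eq_int)
  then have ex: "\<exists>j. cf_rem x j = 0"
    using cf_rem_of_int_divide_eventually_zero[of p "nat q"] by auto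
  show ?thesis
    by (rule that[of "LEAST j. cf_rem x j = 0"]) (use LeastI_ex[OF ex] not_less_Least in auto)
qed

lemma enat_Suc_le_cf_len:
  assumes "cf_rem x j \<noteq> 0"
  shows "enat (Suc j) \<le> cf_len x"
proof (cases "\<exists>i. cf_rem x i = 0")
  case True
  have "j < (LEAST i. cf_rem x i = 0)"
    using LeastI_ex[OF True] cf_rem_zero_mono assms by (metis not_le)
  then show ?thesis using True by (simp add: cf_len_def)
qed (simp add: cf_len_def)

lemma cf_rem_nonzero_if_less_cf_len:
  assumes "enat m \<le> cf_len x" "j < m"
  shows "cf_rem x j \<noteq> 0"
proof
  assume "cf_rem x j = 0"
  then have "(LEAST i. cf_rem x i = 0) \<le> j" by (rule Least_le)
  then have "cf_len x \<le> enat j"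
    using \<open>cf_rem x j = 0\<close> by (auto simp: cf_len_def)
  then show False
    using assms by (metis enat_ord_simps(2) leD order_le_less_trans)
qed

definition cf_bound :: "real \<Rightarrow> nat \<Rightarrow> real" where
  "cf_bound B i = max B (real i * (ln (real i))\<^sup>2)"

lemma cf_bound_mono: "i \<le> i' \<Longrightarrow> cf_bound B i \<le> cf_bound B i'"
proof -
  assume "i \<le> i'"
  have "real i * (ln (real i))\<^sup>2 \<le> real i' * (ln (real i'))\<^sup>2"
  proof (cases "i = 0")
    case False
    then have "(ln (real i))\<^sup>2 \<le> (ln (real i'))\<^sup>2"
      using \<open>i \<le> i'\<close> by (intro power_mono) auto
    then show ?thesis using \<open>i \<le> i'\<close> by (intro mult_mono) auto
  qed simp
  then show ?thesis unfolding cf_bound_def by linarith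
qed

lemma cf_digit_le_cf_bound:
  assumes "x \<in> cfT B" "cf_rem x j \<noteq> 0"
  shows "cf_digit (Suc j) x \<le> cf_bound B (Suc j)"
  using assms enat_Suc_le_cf_len[OF assms(2)] by (auto simp: cfT_def cf_bound_def)

lemma cf_rem_ge_cf_bound:
  assumes "x \<in> cfT B" "cf_rem x j \<noteq> 0" "Suc j \<le> i"
  shows "1 / (cf_bound B i + 1) \<le> cf_rem x j"
proof -
  have "1 \<le> cf_digit (Suc j) x" "cf_digit (Suc j) x \<le> cf_bound B i"
    using cf_digit_Suc_ge_1[OF assms(2)] cf_digit_le_cf_bound[OF assms(1,2)]
      cf_bound_mono[OF assms(3), of B] by auto
  then have "1 / (cf_bound B i + 1) \<le> 1 / (real_of_int (cf_digit (Suc j) x) + 1)"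
    by (intro divide_left_mono) auto
  then show ?thesis using cf_rem_ge_inverse_digit[OF assms(2)] by simp
qed

lemma one_le_cf_bound:
  assumes "x \<in> cfT B" "cf_rem x j \<noteq> 0" "Suc j \<le> i"
  shows "1 \<le> cf_bound B i"
  using cf_digit_Suc_ge_1[OF assms(2)] cf_digit_le_cf_bound[OF assms(1,2)]
    cf_bound_mono[OF assms(3), of B] by linarith

lemma cf_rem_ge_double_cf_bound:
  assumes "x \<in> cfT B" "cf_rem x j \<noteq> 0" "Suc j \<le> i"
  shows "1 / (2 * cf_bound B i + 2) \<le> cf_rem x j"
proof -
  have "1 / (2 * cf_bound B i + 2) \<le> 1 / (cf_bound B i + 1)"
    using one_le_cf_bound[OF assms] by (intro divide_left_mono) auto
  then show ?thesis using cf_rem_ge_cf_bound[OF assms] by simp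
qed

text \<open>The factor 2 and the shift of the index in \<open>cf_bound\<close> make room for the first two
  remainders of \<open>-x\<close>, see \<open>cf_rem_bounded_below_uminus\<close>.\<close>

definition cf_rem_bounded_below :: "real \<Rightarrow> real \<Rightarrow> bool" where
  "cf_rem_bounded_below B y \<longleftrightarrow>
     (\<forall>j. cf_rem y j \<noteq> 0 \<longrightarrow> 1 / (2 * cf_bound B (j + 2) + 2) \<le> cf_rem y j)"

lemma cf_rem_bounded_below_cfT:
  assumes "x \<in> cfT B"
  shows "cf_rem_bounded_below B x"
  unfolding cf_rem_bounded_below_def
  using cf_rem_ge_double_cf_bound[OF assms] by simp

lemma cf_rem_bounded_below_ge:
  assumes "cf_rem_bounded_below B y" "cf_rem y j \<noteq> 0" "cf_bound B (j + 2) \<le> B" "0 \<le> B"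
  shows "1 / (2 * B + 2) \<le> cf_rem y j"
proof -
  have "1 / (2 * B + 2) \<le> 1 / (2 * cf_bound B (j + 2) + 2)"
    using assms(3,4) by (intro divide_left_mono) (auto simp: cf_bound_def)
  then show ?thesis using assms(1,2) by (auto simp: cf_rem_bounded_below_def)
qed

lemma cf_rem_uminus_0:
  assumes "cf_rem x 0 \<noteq> 0"
  shows "cf_rem (- x) 0 = 1 - cf_rem x 0"
  using assms frac_non_zero[of x] by simp

lemma cf_rem_1:
  assumes "cf_rem x 0 \<noteq> 0"
  shows "cf_rem x 1 = frac (1 / cf_rem x 0)"
  using assms by (simp add: cf_rem.simps(2))

text \<open>If \<open>x = [b\<^sub>0; 1, b\<^sub>2, b\<^sub>3, \<dots>]\<close> then \<open>-x = [-b\<^sub>0-1; b\<^sub>2+1, b\<^sub>3, \<dots>]\<close>.\<close>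

lemma cf_rem_uminus_Suc_if_digit_1:
  assumes x0: "cf_rem x 0 \<noteq> 0" and b1: "cf_digit 1 x = 1"
  shows "cf_rem (- x) (Suc j) = cf_rem x (Suc (Suc j))"
proof -
  define t0 t1 where "t0 = cf_rem x 0" and "t1 = cf_rem x 1"
  have t0: "t0 = 1 / (1 + t1)"
    using cf_rem_eq_inverse[OF x0] b1 by (simp add: t0_def t1_def)
  have "t1 \<noteq> 0"
    using t0 cf_rem_less_1[of x 0] by (auto simp: t0_def)
  then have "0 < t1" by (simp add: t1_def less_le)
  have e: "1 - t0 = t1 / (1 + t1)"
    using t0 \<open>0 < t1\<close> by (simp add: field_simps)
  have "1 / (1 - t0) = 1 / t1 + 1"
    unfolding e using \<open>0 < t1\<close> by (simp add: field_simps)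
  then have "cf_rem (- x) (Suc j) = cf_rem (1 / t1) j"
    using cf_rem_Suc_eq_inverse_frac[of "- x" j] cf_rem_uminus_0[OF x0] x0
      cf_rem_frac_cong[of "1 / t1 + 1" "1 / t1" j] by (simp add: t0_def frac_1_eq)
  also have "\<dots> = cf_rem x (Suc (Suc j))"
    using cf_rem_Suc_eq_inverse_frac[of x "Suc j"] cf_rem_Suc_eq_inverse_frac[of "1 / frac x" j]
      cf_rem_1[OF x0] \<open>t1 \<noteq> 0\<close> x0 by (simp add: t1_def)
  finally show ?thesis .
qed

text \<open>If \<open>x = [b\<^sub>0; b\<^sub>1, b\<^sub>2, \<dots>]\<close> with \<open>b\<^sub>1 \<ge> 2\<close> then \<open>-x = [-b\<^sub>0-1; 1, b\<^sub>1-1, b\<^sub>2, \<dots>]\<close>.\<close>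

lemma cf_rem_uminus_if_digit_ge_2:
  assumes x1: "cf_rem x 1 \<noteq> 0" and b1: "2 \<le> cf_digit 1 x"
  shows "cf_rem (- x) 1 = 1 / (real_of_int (cf_digit 1 x) - 1 + cf_rem x 1)"
    and "cf_rem (- x) (Suc (Suc j)) = cf_rem x (Suc j)"
proof -
  have x0: "cf_rem x 0 \<noteq> 0" using x1 cf_rem_zero_mono[of x 0 1] by auto
  define t0 t1 b where "t0 = cf_rem x 0" and "t1 = cf_rem x 1" and "b = real_of_int (cf_digit 1 x)"
  define u where "u = 1 / (b - 1 + t1)"
  have "0 < t1" "2 \<le> b" using x1 b1 by (auto simp: t1_def b_def less_le)
  then have u: "0 < u" "u < 1" by (auto simp: u_def)
  have t0: "t0 = 1 / (b + t1)"
    using cf_rem_eq_inverse[OF x0] by (simp add: t0_def t1_def b_def)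
  then have inv_t0: "1 / t0 = b + t1" by simp
  have e: "1 - t0 = (b - 1 + t1) / (b + t1)"
    using t0 \<open>2 \<le> b\<close> \<open>0 < t1\<close> by (simp add: field_simps)
  have "1 / (1 - t0) = u + 1"
    unfolding e using \<open>2 \<le> b\<close> \<open>0 < t1\<close> by (simp add: u_def field_simps)
  then have frac_inv: "frac (1 / cf_rem (- x) 0) = u"
    using cf_rem_uminus_0[OF x0] u by (simp add: t0_def frac_1_eq frac_eq)
  show "cf_rem (- x) 1 = 1 / (real_of_int (cf_digit 1 x) - 1 + cf_rem x 1)"
    using frac_inv cf_rem_1[of "- x"] cf_rem_uminus_0[OF x0] x0 cf_rem_less_1[of x 0]
    by (simp add: u_def b_def t1_def)
  have "cf_rem (- x) (Suc (Suc j)) = cf_rem u (Suc j)"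
    using cf_rem_Suc_eq_inverse_frac[of "- x" "Suc j"] cf_rem_uminus_0[OF x0] x0
      cf_rem_frac_cong[of "1 / (1 - t0)" u "Suc j"] frac_inv u
    by (simp add: t0_def frac_eq)
  also have "\<dots> = cf_rem (1 / t0) j"
  proof -
    have "frac u = u" "frac u \<noteq> 0" using u by (simp_all add: frac_eq)
    moreover have "frac (1 / u) = frac (1 / t0)"
      using frac_1_eq[of "1 / u"] inv_t0 by (simp add: u_def)
    ultimately show ?thesis
      using cf_rem_Suc_eq_inverse_frac[of u j] cf_rem_frac_cong by metis
  qed
  also have "\<dots> = cf_rem x (Suc j)"
    using cf_rem_Suc_eq_inverse_frac[of x j] x0 by (simp add: t0_def)
  finally show "cf_rem (- x) (Suc (Suc j)) = cf_rem x (Suc j)" .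
qed

text \<open>The four shapes of the index \<open>j\<close> in the expansion of \<open>-x\<close>, according to \<open>d = b\<^sub>1(x)\<close>.\<close>

lemma uminus_index_cases:
  fixes d :: int and j :: nat
  assumes "1 \<le> d"
  obtains "j = 0" | i where "d = 1" "j = Suc i" | "2 \<le> d" "j = 1"
    | i where "2 \<le> d" "j = Suc (Suc i)"
proof (cases j)
  case (Suc i)
  show ?thesis
  proof (cases "d = 1")
    case False
    then have "2 \<le> d" using assms by simp
    then show ?thesis using Suc that(3,4) by (cases i) auto
  qed (use Suc that(2) in blast)
qed (use that(1) in blast)

lemma cf_rem_uminus_0_ge:
  assumes x: "x \<in> cfT B" and x1: "cf_rem x 1 \<noteq> 0"
  shows "1 / (2 * cf_bound B 2 + 2) \<le> cf_rem (- x) 0"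
proof -
  have x0: "cf_rem x 0 \<noteq> 0" using x1 cf_rem_zero_mono[of x 0 1] by auto
  define t1 b where "t1 = cf_rem x 1" and "b = cf_digit 1 x"
  have t1: "0 < t1" "t1 < 1" using x1 by (simp_all add: t1_def order_le_neq_trans)
  have e: "cf_rem (- x) 0 = 1 - 1 / (b + t1)"
    using cf_rem_uminus_0[OF x0] cf_rem_eq_inverse[OF x0] by (simp add: t1_def b_def)
  have "1 \<le> b" using cf_digit_Suc_ge_1[OF x0] by (simp add: b_def)
  then consider "b = 1" | "2 \<le> b" by linarith
  then show ?thesis
  proof cases
    case 1
    have "1 / (2 * cf_bound B 2 + 2) = 1 / (cf_bound B 2 + 1) / 2" by (simp add: algebra_simps)
    also have "\<dots> \<le> t1 / 2"
      using cf_rem_ge_cf_bound[OF x x1, of 2] by (intro divide_right_mono) (simp_all add: t1_def)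
    also have "\<dots> \<le> t1 / (1 + t1)" using t1 by (intro divide_left_mono) auto
    also have "\<dots> = cf_rem (- x) 0" using e t1 1 by (simp add: field_simps)
    finally show ?thesis .
  next
    case 2
    have "1 / (b + t1) \<le> 1 / 2" using 2 t1 by (intro divide_left_mono) auto
    moreover have "1 / (2 * cf_bound B 2 + 2) \<le> 1 / 2"
      using one_le_cf_bound[OF x x0, of 2] by (intro divide_left_mono) auto
    ultimately show ?thesis using e by simp
  qed
qed

lemma cf_rem_bounded_below_uminus:
  assumes x: "x \<in> cfT B" and x1: "cf_rem x 1 \<noteq> 0"
  shows "cf_rem_bounded_below B (- x)"
  unfolding cf_rem_bounded_below_def
proof (intro allI impI)
  fix j assume j: "cf_rem (- x) j \<noteq> 0"
  have x0: "cf_rem x 0 \<noteq> 0" using x1 cf_rem_zero_mono[of x 0 1] by auto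
  have "1 \<le> cf_digit 1 x" using cf_digit_Suc_ge_1[OF x0] by simp
  then show "1 / (2 * cf_bound B (j + 2) + 2) \<le> cf_rem (- x) j"
  proof (cases rule: uminus_index_cases[OF \<open>1 \<le> cf_digit 1 x\<close>, of j])
    case 1
    then show ?thesis using cf_rem_uminus_0_ge[OF x x1] by (simp add: numeral_2_eq_2)
  next
    case (2 i)
    then have "cf_rem (- x) j = cf_rem x (Suc (Suc i))"
      using cf_rem_uminus_Suc_if_digit_1[OF x0] by simp
    then show ?thesis using cf_rem_ge_double_cf_bound[OF x, of "Suc (Suc i)" "j + 2"] j 2 by simp
  next
    case 3
    have "cf_digit 1 x \<le> cf_bound B (j + 2)"
      using cf_digit_le_cf_bound[OF x x0] cf_bound_mono[of 1 "j + 2" B] by simp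
    moreover have "2 \<le> real_of_int (cf_digit 1 x)" "0 < cf_rem x 1" "cf_rem x 1 < 1"
      using 3 x1 by (simp_all add: order_le_neq_trans)
    ultimately have "1 / (2 * cf_bound B (j + 2) + 2) \<le> 1 / (real_of_int (cf_digit 1 x) - 1 + cf_rem x 1)"
      by (intro divide_left_mono mult_pos_pos) linarith+
    then show ?thesis using cf_rem_uminus_if_digit_ge_2(1)[OF x1 3(1)] 3(2) by simp
  next
    case (4 i)
    then have "cf_rem (- x) j = cf_rem x (Suc i)"
      using cf_rem_uminus_if_digit_ge_2(2)[OF x1] by simp
    then show ?thesis using cf_rem_ge_double_cf_bound[OF x, of "Suc i" "j + 2"] j 4 by simp
  qed
qed

lemma prod_le_sqrt_power_if_adjacent_le:
  fixes v :: "nat \<Rightarrow> real"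
  assumes q: "0 < q" "q \<le> 1"
    and v: "\<And>i. j \<le> i \<Longrightarrow> i < j + l \<Longrightarrow> 0 \<le> v i \<and> v i \<le> 1"
    and adjacent: "\<And>i. j \<le> i \<Longrightarrow> Suc i < j + l \<Longrightarrow> v i * v (Suc i) \<le> q"
  shows "prod v {j..<j + l} \<le> sqrt q ^ l / sqrt q"
  using v adjacent
proof (induction l arbitrary: j rule: less_induct)
  case (less l)
  consider "l = 0" | "l = 1" | l' where "l = Suc (Suc l')"
    by (metis One_nat_def not0_implies_Suc)
  then show ?case
  proof cases
    case 1
    then show ?thesis using q by (simp add: real_sqrt_le_1_iff)
  next
    case 2
    then show ?thesis using less.prems(1)[of j] q by simp
  next
    case (3 l')
    have "{j..<j + l} = insert j (insert (Suc j) {Suc (Suc j)..<Suc (Suc j) + l'})"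
      using 3 by auto
    then have "prod v {j..<j + l} = v j * v (Suc j) * prod v {Suc (Suc j)..<Suc (Suc j) + l'}"
      by simp
    also have "\<dots> \<le> q * (sqrt q ^ l' / sqrt q)"
    proof (rule mult_mono)
      show "v j * v (Suc j) \<le> q" using less.prems(2)[of j] 3 by simp
      show "prod v {Suc (Suc j)..<Suc (Suc j) + l'} \<le> sqrt q ^ l' / sqrt q"
        using less.IH[of l' "Suc (Suc j)"] less.prems 3 by simp
      show "0 \<le> prod v {Suc (Suc j)..<Suc (Suc j) + l'}"
        using less.prems(1) 3 by (intro prod_nonneg) auto
    qed (use q in simp)
    also have "\<dots> = sqrt q ^ l / sqrt q"
      using 3 q by (simp add: mult.assoc[symmetric])
    finally show ?thesis .
  qed
qed

definition cf_gap :: "nat \<Rightarrow> real" where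
  "cf_gap n = sqrt (1 / 2) ^ n / sqrt (1 / 2)"

lemma cf_gap_nonneg [simp]: "0 \<le> cf_gap n"
  by (simp add: cf_gap_def)

lemma cf_gap_antimono: "n \<le> n' \<Longrightarrow> cf_gap n' \<le> cf_gap n"
  unfolding cf_gap_def by (intro divide_right_mono power_decreasing) auto

lemma cf_rem_diff_le_prod:
  assumes digits: "\<And>j. 1 \<le> j \<Longrightarrow> j \<le> m \<Longrightarrow> cf_digit j x = cf_digit j y"
    and nz: "\<And>j. j < m \<Longrightarrow> cf_rem x j \<noteq> 0 \<and> cf_rem y j \<noteq> 0"
    and "i \<le> m"
  shows "\<bar>cf_rem x i - cf_rem y i\<bar> \<le> prod (cf_rem x) {i..<m}"
  using \<open>i \<le> m\<close>
proof (induction i rule: inc_induct)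
  case base
  show ?case unfolding atLeastLessThan_empty[OF order_refl] prod.empty abs_le_iff
    using cf_rem_less_1[of x m] cf_rem_less_1[of y m] cf_rem_nonneg[of x m]
      cf_rem_nonneg[of y m] by linarith
next
  case (step i)
  define b u v where "b = real_of_int (cf_digit (Suc i) x)"
    and "u = cf_rem x (Suc i)" and "v = cf_rem y (Suc i)"
  have "1 \<le> b" using cf_digit_Suc_ge_1 nz[OF step(2)] by (simp add: b_def)
  have ex: "cf_rem x i = 1 / (b + u)"
    using cf_rem_eq_inverse nz[OF step(2)] by (simp add: b_def u_def)
  have ey: "cf_rem y i = 1 / (b + v)"
    using cf_rem_eq_inverse[of y i] nz[OF step(2)] digits[of "Suc i"] step(2)
    by (simp add: b_def v_def)
  have "0 \<le> u" "0 \<le> v" by (simp_all add: u_def v_def)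
  then have "cf_rem x i - cf_rem y i = cf_rem x i * cf_rem y i * (v - u)"
    unfolding ex ey using \<open>1 \<le> b\<close> by (simp add: field_simps)
  then have "\<bar>cf_rem x i - cf_rem y i\<bar> = cf_rem x i * cf_rem y i * \<bar>u - v\<bar>"
    by (simp add: abs_mult abs_minus_commute)
  also have "\<dots> \<le> cf_rem x i * 1 * \<bar>u - v\<bar>"
    by (intro mult_right_mono mult_left_mono) (auto intro: less_imp_le)
  also have "\<dots> \<le> cf_rem x i * prod (cf_rem x) {Suc i..<m}"
    using step.IH by (simp add: u_def v_def mult_left_mono)
  also have "\<dots> = prod (cf_rem x) {i..<m}"
    using step(2) by (simp add: prod.atLeast_Suc_lessThan)
  finally show ?case .
qed

lemma cf_rem_diff_le:
  assumes digits: "\<And>j. 1 \<le> j \<Longrightarrow> j \<le> m \<Longrightarrow> cf_digit j x = cf_digit j y"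
    and nz: "\<And>j. j < m \<Longrightarrow> cf_rem x j \<noteq> 0 \<and> cf_rem y j \<noteq> 0"
    and "i \<le> m"
  shows "\<bar>cf_rem x i - cf_rem y i\<bar> \<le> cf_gap (m - i)"
proof -
  have "\<bar>cf_rem x i - cf_rem y i\<bar> \<le> prod (cf_rem x) {i..<i + (m - i)}"
    using cf_rem_diff_le_prod[OF digits nz \<open>i \<le> m\<close>] \<open>i \<le> m\<close> by simp
  also have "\<dots> \<le> cf_gap (m - i)" unfolding cf_gap_def
    by (rule prod_le_sqrt_power_if_adjacent_le)
      (use cf_rem_mult_Suc_le_half in \<open>auto intro: less_imp_le\<close>)
  finally show ?thesis .
qed

lemma abs_inverse_diff_le:
  fixes c a b :: real
  assumes "1 \<le> c" "0 \<le> a" "0 \<le> b"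
  shows "\<bar>1 / (c + a) - 1 / (c + b)\<bar> \<le> \<bar>a - b\<bar>"
proof -
  have "1 / (c + a) - 1 / (c + b) = (b - a) / ((c + a) * (c + b))"
    using assms by (simp add: field_simps)
  then have "\<bar>1 / (c + a) - 1 / (c + b)\<bar> = \<bar>a - b\<bar> / ((c + a) * (c + b))"
    using assms by (simp add: abs_minus_commute)
  also have "\<dots> \<le> \<bar>a - b\<bar> / 1"
  proof -
    have "1 * 1 \<le> (c + a) * (c + b)" using assms by (intro mult_mono) auto
    then show ?thesis by (intro divide_left_mono) auto
  qed
  finally show ?thesis by simp
qed

lemma cf_rem_uminus_1_diff_le:
  assumes "cf_rem x 1 \<noteq> 0" "cf_rem y 1 \<noteq> 0" "2 \<le> cf_digit 1 x" "cf_digit 1 y = cf_digit 1 x"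
  shows "\<bar>cf_rem (- x) 1 - cf_rem (- y) 1\<bar> \<le> \<bar>cf_rem x 1 - cf_rem y 1\<bar>"
  using cf_rem_uminus_if_digit_ge_2(1)[OF assms(1,3)] cf_rem_uminus_if_digit_ge_2(1)[OF assms(2)]
    abs_inverse_diff_le[of "real_of_int (cf_digit 1 x) - 1"] assms(3,4)
  by simp

lemma cf_rem_uminus_diff_le:
  assumes digits: "\<And>j. 1 \<le> j \<Longrightarrow> j \<le> m \<Longrightarrow> cf_digit j x = cf_digit j y"
    and nz: "\<And>j. j < m \<Longrightarrow> cf_rem x j \<noteq> 0 \<and> cf_rem y j \<noteq> 0"
    and "2 \<le> m" "Suc j \<le> m"
  shows "\<bar>cf_rem (- x) j - cf_rem (- y) j\<bar> \<le> cf_gap (m - Suc j)"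
proof -
  note gap = cf_rem_diff_le[where m=m and x=x and y=y, OF digits nz]
  have x0: "cf_rem x 0 \<noteq> 0" "cf_rem y 0 \<noteq> 0" and x1: "cf_rem x 1 \<noteq> 0" "cf_rem y 1 \<noteq> 0"
    using nz[of 0] nz[of 1] \<open>2 \<le> m\<close> by auto
  have b: "cf_digit 1 y = cf_digit 1 x" using digits[of 1] \<open>2 \<le> m\<close> by simp
  have "1 \<le> cf_digit 1 x" using cf_digit_Suc_ge_1[OF x0(1)] by simp
  then show ?thesis
  proof (cases rule: uminus_index_cases[OF \<open>1 \<le> cf_digit 1 x\<close>, of j])
    case 1
    then show ?thesis
      using gap[where i=0] cf_gap_antimono[of "m - 1" m] cf_rem_uminus_0 x0
      by (simp add: abs_minus_commute)
  next
    case (2 i)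
    then show ?thesis
      using gap[where i="Suc (Suc i)"] \<open>Suc j \<le> m\<close> b
        cf_rem_uminus_Suc_if_digit_1[OF x0(1)] cf_rem_uminus_Suc_if_digit_1[OF x0(2)] by simp
  next
    case 3
    have "\<bar>cf_rem (- x) 1 - cf_rem (- y) 1\<bar> \<le> cf_gap (m - 1)"
      using cf_rem_uminus_1_diff_le[OF x1 3(1) b] gap[where i=1] \<open>2 \<le> m\<close> by simp
    moreover have "cf_gap (m - 1) \<le> cf_gap (m - Suc j)" using 3 by (intro cf_gap_antimono) simp
    ultimately show ?thesis using 3 by simp
  next
    case (4 i)
    then show ?thesis
      using gap[where i="Suc i"] cf_gap_antimono[of "m - Suc j" "m - Suc i"] \<open>Suc j \<le> m\<close> b
        cf_rem_uminus_if_digit_ge_2(2)[OF x1(1)] cf_rem_uminus_if_digit_ge_2(2)[OF x1(2)]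
      by (simp add: diff_le_mono2)
  qed
qed

lemma cf_rem_uminus_nonzero:
  assumes nz: "\<And>j. j < m \<Longrightarrow> cf_rem x j \<noteq> 0" and "2 \<le> m" "j < m - 1"
  shows "cf_rem (- x) j \<noteq> 0"
proof -
  have x0: "cf_rem x 0 \<noteq> 0" and x1: "cf_rem x 1 \<noteq> 0" using nz[of 0] nz[of 1] \<open>2 \<le> m\<close> by auto
  have "1 \<le> cf_digit 1 x" using cf_digit_Suc_ge_1[OF x0] by simp
  then show ?thesis
  proof (cases rule: uminus_index_cases[OF \<open>1 \<le> cf_digit 1 x\<close>, of j])
    case 1
    then show ?thesis using cf_rem_uminus_0[OF x0] cf_rem_less_1[of x 0] by simp
  next
    case (2 i)
    then show ?thesis
      using nz[of "Suc (Suc i)"] \<open>j < m - 1\<close> cf_rem_uminus_Suc_if_digit_1[OF x0] by simp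
  next
    case 3
    then have "2 \<le> real_of_int (cf_digit 1 x)" by simp
    then have "1 \<le> real_of_int (cf_digit 1 x) - 1 + cf_rem x 1"
      using cf_rem_nonneg[of x 1] by linarith
    then show ?thesis using cf_rem_uminus_if_digit_ge_2(1)[OF x1] 3 by simp
  next
    case (4 i)
    then show ?thesis
      using nz[of "Suc i"] \<open>j < m - 1\<close> cf_rem_uminus_if_digit_ge_2(2)[OF x1] by simp
  qed
qed

lemma cf_rem_abs_diff_le:
  assumes digits: "\<And>j. j \<le> m \<Longrightarrow> cf_digit j x = cf_digit j y"
    and nz: "\<And>j. j < m \<Longrightarrow> cf_rem x j \<noteq> 0 \<and> cf_rem y j \<noteq> 0"
    and "2 \<le> m" "Suc j \<le> m"
  shows "\<bar>cf_rem \<bar>x\<bar> j - cf_rem \<bar>y\<bar> j\<bar> \<le> cf_gap (m - Suc j)"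
proof -
  have "\<lfloor>x\<rfloor> = \<lfloor>y\<rfloor>" using digits[of 0] by simp
  then have "0 \<le> x \<longleftrightarrow> 0 \<le> y" by (metis zero_le_floor)
  moreover have "\<bar>cf_rem x j - cf_rem y j\<bar> \<le> cf_gap (m - Suc j)"
    using cf_rem_diff_le[where m=m and x=x and y=y and i=j, OF _ nz] digits
      cf_gap_antimono[of "m - Suc j" "m - j"] assms(4) by (simp add: diff_le_mono2)
  ultimately show ?thesis
    using cf_rem_uminus_diff_le[OF digits nz assms(3,4)] by auto
qed

lemma sgn_eq_if_floor_eq:
  fixes x y :: real
  assumes "\<lfloor>x\<rfloor> = \<lfloor>y\<rfloor>" "x \<notin> \<int>" "y \<notin> \<int>"
  shows "sgn x = sgn y"
proof -
  have "0 \<le> x \<longleftrightarrow> 0 \<le> y" using assms(1) by (metis zero_le_floor)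
  moreover have "x \<noteq> 0" "y \<noteq> 0" using assms(2,3) by auto
  ultimately show ?thesis by (auto simp: sgn_if)
qed

lemma cf_rem_abs_nonzero:
  assumes "\<And>j. j < m \<Longrightarrow> cf_rem x j \<noteq> 0" "2 \<le> m" "j < m - 1"
  shows "cf_rem \<bar>x\<bar> j \<noteq> 0"
  using assms cf_rem_uminus_nonzero[OF assms] by (cases "0 \<le> x") auto

lemma cf_rem_bounded_below_abs:
  assumes "x \<in> cfT B" "cf_rem x 1 \<noteq> 0"
  shows "cf_rem_bounded_below B \<bar>x\<bar>"
  using cf_rem_bounded_below_cfT[OF assms(1)] cf_rem_bounded_below_uminus[OF assms]
  by (simp add: abs_if)

section \<open>Linear recurrences\<close>

lemma norm_prod_le_sqrt_power:
  fixes c :: "nat \<Rightarrow> complex"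
  assumes "\<And>j. j < n \<Longrightarrow> norm (c j) \<le> 1"
    and "\<And>j. Suc j < n \<Longrightarrow> norm (c j) * norm (c (Suc j)) \<le> q"
    and "0 < q" "q \<le> 1" "j \<le> n"
  shows "norm (prod c {..<j}) \<le> sqrt q ^ j / sqrt q"
proof -
  have "norm (prod c {..<j}) = prod (\<lambda>i. norm (c i)) {0..<0 + j}"
    by (simp add: prod_norm atLeast0LessThan)
  also have "\<dots> \<le> sqrt q ^ j / sqrt q"
    by (rule prod_le_sqrt_power_if_adjacent_le) (use assms in auto)
  finally show ?thesis .
qed

lemma norm_recurrence_two_step_le:
  fixes g H c :: "nat \<Rightarrow> complex"
  assumes "g j = H j + c j * g (Suc j)" "g (Suc j) = H (Suc j) + c (Suc j) * g (Suc (Suc j))"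
    and "norm (c j) \<le> 1"
  shows "norm (g j) \<le> norm (H j) + norm (H (Suc j))
    + norm (c j) * norm (c (Suc j)) * norm (g (Suc (Suc j)))"
proof -
  have "g j = H j + c j * H (Suc j) + c j * c (Suc j) * g (Suc (Suc j))"
    using assms(1,2) by (simp add: algebra_simps)
  then have "norm (g j) \<le> norm (H j + c j * H (Suc j)) + norm (c j * c (Suc j) * g (Suc (Suc j)))"
    by (simp add: norm_triangle_ineq)
  also have "\<dots> \<le> norm (H j) + norm (c j) * norm (H (Suc j))
      + norm (c j) * norm (c (Suc j)) * norm (g (Suc (Suc j)))"
    using norm_triangle_ineq[of "H j" "c j * H (Suc j)"] by (simp add: norm_mult)
  also have "norm (c j) * norm (H (Suc j)) \<le> norm (H (Suc j))"
    using assms(3) by (simp add: mult_left_le_one_le)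
  finally show ?thesis by simp
qed

text \<open>Two steps of the recurrence contract by \<open>q\<close>, which beats the growth \<open>E\<^sup>2\<close> of the
  inhomogeneity over two steps.\<close>

lemma recurrence_norm_le:
  fixes g H c :: "nat \<Rightarrow> complex"
  assumes rec: "\<And>j. j < n \<Longrightarrow> g j = H j + c j * g (Suc j)"
    and c: "\<And>j. j < n \<Longrightarrow> norm (c j) \<le> 1"
    and pair: "\<And>j. Suc j < n \<Longrightarrow> norm (c j) * norm (c (Suc j)) \<le> q"
    and H: "\<And>j. j < n \<Longrightarrow> norm (H j) \<le> K * E ^ j"
    and gn: "norm (g n) \<le> F"
    and pos: "0 \<le> K" "1 \<le> E" "0 \<le> q" "q * E\<^sup>2 \<le> \<rho>" "\<rho> < 1" "0 \<le> F"
    and "j \<le> n"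
  shows "norm (g j) \<le> (K * (1 + E) + F) / (1 - \<rho>) * E ^ j"
proof -
  define Z where "Z = (K * (1 + E) + F) / (1 - \<rho>)"
  have "0 \<le> \<rho>" using pos(3,4) by (meson order.trans mult_nonneg_nonneg zero_le_power2)
  have "0 \<le> Z" unfolding Z_def using pos by (intro divide_nonneg_pos) auto
  have Z: "K * (1 + E) + F + \<rho> * Z = Z" using pos by (simp add: Z_def field_simps)
  have "0 \<le> K * E" "0 \<le> \<rho> * Z" using pos \<open>0 \<le> \<rho>\<close> \<open>0 \<le> Z\<close> by simp_all
  moreover have "K + K * E + F + \<rho> * Z = Z" using Z by (simp add: algebra_simps)
  ultimately have "K + F \<le> Z" by linarith
  show ?thesis
    unfolding Z_def[symmetric] using \<open>j \<le> n\<close>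
  proof (induction "n - j" arbitrary: j rule: less_induct)
    case less
    have Ej: "1 \<le> E ^ j" using pos by simp
    consider "j = n" | "Suc j = n" | "Suc (Suc j) \<le> n" using less.prems by linarith
    then show ?case
    proof cases
      case 1
      have "F \<le> Z * E ^ j"
        using \<open>K + F \<le> Z\<close> pos mult_left_mono[OF Ej \<open>0 \<le> Z\<close>] by linarith
      then show ?thesis using gn 1 by simp
    next
      case 2
      have "norm (g j) \<le> norm (H j) + norm (c j) * norm (g (Suc j))"
        using rec[of j] 2 norm_triangle_ineq[of "H j" "c j * g (Suc j)"] by (simp add: norm_mult)
      also have "\<dots> \<le> K * E ^ j + 1 * (F * E ^ j)"
      proof -
        have "F * 1 \<le> F * E ^ j" using Ej pos by (intro mult_left_mono) auto
        then have "norm (g (Suc j)) \<le> F * E ^ j" using gn 2 by simp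
        then show ?thesis using H[of j] c[of j] 2 by (intro add_mono mult_mono) auto
      qed
      also have "\<dots> \<le> Z * E ^ j"
        using \<open>K + F \<le> Z\<close> Ej by (simp add: mult_right_mono flip: distrib_right)
      finally show ?thesis .
    next
      case 3
      have "norm (g j) \<le> norm (H j) + norm (H (Suc j))
          + norm (c j) * norm (c (Suc j)) * norm (g (Suc (Suc j)))"
        by (rule norm_recurrence_two_step_le) (use rec[of j] rec[of "Suc j"] c[of j] 3 in auto)
      also have "\<dots> \<le> K * E ^ j + K * E ^ Suc j + q * (Z * E ^ Suc (Suc j))"
        using H[of j] H[of "Suc j"] pair[of j] less.hyps[of "Suc (Suc j)"] 3 pos
        by (intro add_mono mult_mono) auto
      also have "\<dots> = E ^ j * (K * (1 + E) + (q * E\<^sup>2) * Z)"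
        by (simp add: algebra_simps power2_eq_square)
      also have "\<dots> \<le> E ^ j * (K * (1 + E) + \<rho> * Z)"
        using pos \<open>0 \<le> Z\<close> Ej by (intro mult_left_mono add_left_mono mult_right_mono) auto
      also have "\<dots> \<le> E ^ j * Z" using Z pos Ej by (intro mult_left_mono) linarith+
      finally show ?thesis by (simp add: mult.commute)
    qed
  qed
qed

lemma telescope_prod:
  fixes D c :: "nat \<Rightarrow> complex"
  shows "D 0 = (\<Sum>j<N. prod c {..<j} * (D j - c j * D (Suc j))) + prod c {..<N} * D N"
  by (induction N) (auto simp: algebra_simps)

lemma recurrence_diff_norm_le:
  fixes g1 g2 H1 H2 c1 c2 :: "nat \<Rightarrow> complex"
  assumes rec1: "\<And>j. j < N \<Longrightarrow> g1 j = H1 j + c1 j * g1 (Suc j)"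
    and rec2: "\<And>j. j < N \<Longrightarrow> g2 j = H2 j + c2 j * g2 (Suc j)"
    and W: "\<And>j. j \<le> N \<Longrightarrow> norm (prod c1 {..<j}) \<le> w * s ^ j"
    and H: "\<And>j. j < N \<Longrightarrow> norm (H1 j - H2 j) \<le> \<eta>"
    and c: "\<And>j. j < N \<Longrightarrow> norm (c1 j - c2 j) \<le> \<Lambda>"
    and g1: "\<And>j. j \<le> N \<Longrightarrow> norm (g1 j) \<le> Z * E ^ j"
    and g2: "\<And>j. j \<le> N \<Longrightarrow> norm (g2 j) \<le> Z * E ^ j"
    and pos: "0 \<le> s" "s < 1" "s * E \<le> 1" "0 \<le> w" "1 \<le> E" "0 \<le> \<eta>" "0 \<le> \<Lambda>" "0 \<le> Z"
  shows "norm (g1 0 - g2 0) \<le> w * (\<eta> / (1 - s) + N * \<Lambda> * Z * E) + w * (s * E) ^ N * (2 * Z)"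
proof -
  define D where "D j = g1 j - g2 j" for j
  have step_bound: "norm (prod c1 {..<j} * (D j - c1 j * D (Suc j))) \<le> w * \<eta> * s ^ j + w * \<Lambda> * Z * E"
    if j: "j < N" for j
  proof -
    have "D j - c1 j * D (Suc j) = (H1 j - H2 j) + (c1 j - c2 j) * g2 (Suc j)"
      using rec1[OF j] rec2[OF j] by (simp add: D_def algebra_simps)
    then have "norm (D j - c1 j * D (Suc j)) \<le> \<eta> + \<Lambda> * (Z * E ^ Suc j)"
      using H[OF j] c[OF j] g2[of "Suc j"] j pos
      by (auto simp: norm_mult intro!: order.trans[OF norm_triangle_ineq] add_mono mult_mono)
    then have "norm (prod c1 {..<j} * (D j - c1 j * D (Suc j)))
        \<le> (w * s ^ j) * (\<eta> + \<Lambda> * (Z * E ^ Suc j))"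
      using W[of j] j pos by (auto simp: norm_mult intro!: mult_mono)
    also have "\<dots> = w * \<eta> * s ^ j + w * \<Lambda> * Z * E * (s * E) ^ j"
      by (simp add: algebra_simps power_mult_distrib)
    also have "\<dots> \<le> w * \<eta> * s ^ j + w * \<Lambda> * Z * E * 1"
      using pos by (intro add_left_mono mult_left_mono power_le_one) auto
    finally show ?thesis by simp
  qed
  have "norm (D 0) \<le> norm (\<Sum>j<N. prod c1 {..<j} * (D j - c1 j * D (Suc j)))
      + norm (prod c1 {..<N} * D N)"
    by (subst telescope_prod[where D=D and N=N and c=c1]) (rule norm_triangle_ineq)
  also have "norm (\<Sum>j<N. prod c1 {..<j} * (D j - c1 j * D (Suc j)))
      \<le> (\<Sum>j<N. w * \<eta> * s ^ j + w * \<Lambda> * Z * E)"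
    by (intro order_trans[OF norm_sum] sum_mono step_bound) simp
  also have "\<dots> = w * \<eta> * (\<Sum>j<N. s ^ j) + N * (w * \<Lambda> * Z * E)"
    by (simp add: sum.distrib sum_distrib_left)
  also have "(\<Sum>j<N. s ^ j) \<le> 1 / (1 - s)"
    using pos by (simp add: sum_gp_strict divide_right_mono)
  also have "norm (prod c1 {..<N} * D N) \<le> (w * s ^ N) * (2 * Z * E ^ N)"
  proof -
    have "norm (D N) \<le> 2 * Z * E ^ N"
      using g1[of N] g2[of N] norm_triangle_ineq4[of "g1 N" "g2 N"] unfolding D_def by linarith
    then show ?thesis using W[of N] pos by (auto simp: norm_mult intro!: mult_mono)
  qed
  finally have "norm (D 0) \<le> w * \<eta> * (1 / (1 - s)) + N * (w * \<Lambda> * Z * E)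
      + (w * s ^ N) * (2 * Z * E ^ N)"
    using pos by (simp add: mult_left_mono)
  then show ?thesis by (simp add: D_def algebra_simps power_mult_distrib)
qed

section \<open>Elementary estimates\<close>

lemma abs_ln_diff_le:
  fixes l u v :: real
  assumes "0 < l" "l \<le> u" "l \<le> v"
  shows "\<bar>ln u - ln v\<bar> \<le> \<bar>u - v\<bar> / l"
proof -
  have le: "ln a - ln b \<le> \<bar>a - b\<bar> / l" if "l \<le> a" "l \<le> b" for a b :: real
  proof -
    have "0 < a" "0 < b" using that assms by linarith+
    then have "ln a - ln b = ln (a / b)" by (simp add: ln_div)
    also have "\<dots> \<le> a / b - 1" using \<open>0 < a\<close> \<open>0 < b\<close> by (intro ln_le_minus_one) auto
    also have "\<dots> = (a - b) / b" using \<open>0 < b\<close> by (simp add: field_simps)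
    also have "\<dots> \<le> \<bar>a - b\<bar> / b" using \<open>0 < b\<close> by (intro divide_right_mono) auto
    also have "\<dots> \<le> \<bar>a - b\<bar> / l" using that assms by (intro divide_left_mono) auto
    finally show ?thesis .
  qed
  show ?thesis using le[of u v] le[of v u] assms by (auto simp: abs_minus_commute)
qed

lemma norm_of_real_powr_minus:
  "0 < t \<Longrightarrow> norm (complex_of_real t powr (- k)) = t powr (- Re k)"
  by (subst norm_powr_real_powr) auto

lemma norm_of_real_powr_diff_le:
  assumes k: "Re k < 0" and l: "0 < l" "l \<le> u" "l \<le> v" "u \<le> 1" "v \<le> 1"
  shows "norm (complex_of_real u powr (- k) - complex_of_real v powr (- k))
    \<le> norm k * (\<bar>u - v\<bar> / l) * exp (norm k * (\<bar>u - v\<bar> / l))"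
proof -
  define A B where "A = - k * complex_of_real (ln u)" and "B = - k * complex_of_real (ln v)"
  have "0 < u" "0 < v" using l by auto
  have "exp B * (exp (A - B) - 1) = exp A - exp B"
    by (simp add: algebra_simps flip: exp_add)
  then have "complex_of_real u powr (- k) - complex_of_real v powr (- k) = exp B * (exp (A - B) - 1)"
    using \<open>0 < u\<close> \<open>0 < v\<close> by (simp add: powr_def Ln_of_real A_def B_def)
  then have "norm (complex_of_real u powr (- k) - complex_of_real v powr (- k))
      = norm (exp B) * norm (exp (A - B) - 1)"
    by (simp add: norm_mult)
  also have "\<dots> \<le> norm (exp (A - B) - 1)"
  proof (rule mult_left_le_one_le)
    have "Re B = - Re k * ln v" by (simp add: B_def)
    also have "\<dots> \<le> 0" using k \<open>0 < v\<close> l by (intro mult_nonneg_nonpos) auto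
    finally show "norm (exp B) \<le> 1" by simp
  qed auto
  also have "\<dots> \<le> exp (norm (A - B)) * norm (A - B)"
    using Taylor_exp_field[of "A - B" 0] by simp
  also have "\<dots> \<le> exp (norm k * (\<bar>u - v\<bar> / l)) * (norm k * (\<bar>u - v\<bar> / l))"
  proof -
    have "norm (A - B) = norm k * \<bar>ln u - ln v\<bar>"
      by (simp add: A_def B_def norm_mult abs_minus_commute flip: right_diff_distrib of_real_diff)
    also have "\<dots> \<le> norm k * (\<bar>u - v\<bar> / l)"
      using abs_ln_diff_le[OF l(1-3)] by (intro mult_left_mono) auto
    finally show ?thesis by (intro mult_mono) auto
  qed
  finally show ?thesis by (simp add: mult_ac)
qed

lemma norm_of_real_powr_diff_le_scaled:
  assumes "Re k < 0" "0 \<le> B" "1 / (2 * B + 2) \<le> u" "1 / (2 * B + 2) \<le> v" "u \<le> 1" "v \<le> 1"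
    and "\<bar>u - v\<bar> \<le> d"
  shows "norm (complex_of_real u powr (- k) - complex_of_real v powr (- k))
    \<le> norm k * (d * (2 * B + 2)) * exp (norm k * (d * (2 * B + 2)))"
proof -
  have "0 < 1 / (2 * B + 2)" using assms(2) by simp
  have "0 \<le> d" using assms(7) by linarith
  have "\<bar>u - v\<bar> / (1 / (2 * B + 2)) \<le> d * (2 * B + 2)"
    using assms(2,7) by (simp add: mult_right_mono)
  then have X: "norm k * (\<bar>u - v\<bar> / (1 / (2 * B + 2))) \<le> norm k * (d * (2 * B + 2))"
    by (intro mult_left_mono) auto
  have "norm k * (\<bar>u - v\<bar> / (1 / (2 * B + 2))) * exp (norm k * (\<bar>u - v\<bar> / (1 / (2 * B + 2))))
      \<le> norm k * (d * (2 * B + 2)) * exp (norm k * (d * (2 * B + 2)))"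
    using X \<open>0 \<le> d\<close> assms(2) by (intro mult_mono[OF X]) auto
  with norm_of_real_powr_diff_le[OF assms(1) \<open>0 < 1 / (2 * B + 2)\<close> assms(3-6)]
  show ?thesis by linarith
qed

lemma powr_le_powr_inverse_bound:
  fixes u M \<delta> :: real
  assumes "0 < u" "u \<le> 1" "1 / M \<le> u" "1 \<le> M"
  shows "u powr (\<delta> - 1) \<le> M powr (max 0 (1 - \<delta>))"
proof (cases "1 \<le> \<delta>")
  case True
  have "u powr (\<delta> - 1) \<le> 1 powr (\<delta> - 1)" using assms True by (intro powr_mono2) auto
  then show ?thesis using True assms by simp
next
  case False
  have "u powr (\<delta> - 1) = (1 / u) powr (1 - \<delta>)"
    using assms by (simp add: powr_divide powr_minus_divide[symmetric])
  also have "\<dots> \<le> M powr (1 - \<delta>)"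
    using False assms by (intro powr_mono2) (auto simp: field_simps)
  finally show ?thesis using False by simp
qed

lemma max_powr_le_add:
  fixes X Y g :: real
  assumes "0 < X" "0 < Y" "0 \<le> g"
  shows "max X Y powr g \<le> X powr g + Y powr g"
  using assms by (cases "X \<le> Y") (auto simp: max_def)

lemma exists_le_const_add_if_eventually_le:
  fixes \<phi> \<psi> :: "nat \<Rightarrow> real"
  assumes "eventually (\<lambda>j. \<phi> j \<le> \<psi> j) sequentially" "\<And>j. 0 \<le> \<psi> j"
  shows "\<exists>c\<ge>0. \<forall>j. \<phi> j \<le> c + \<psi> j"
proof -
  obtain N where N: "\<And>j. N \<le> j \<Longrightarrow> \<phi> j \<le> \<psi> j"
    using assms(1) unfolding eventually_sequentially by blast
  define c where "c = (\<Sum>i<N. \<bar>\<phi> i\<bar>)"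
  have "0 \<le> c" unfolding c_def by (simp add: sum_nonneg)
  have "\<phi> j \<le> c + \<psi> j" for j
  proof (cases "j < N")
    case True
    then have "\<bar>\<phi> j\<bar> \<le> c" unfolding c_def by (intro member_le_sum) auto
    then show ?thesis using assms(2)[of j] abs_ge_self[of "\<phi> j"] by linarith
  next
    case False
    then show ?thesis using N[of j] \<open>0 \<le> c\<close> by simp
  qed
  then show ?thesis using \<open>0 \<le> c\<close> by blast
qed

lemma cf_bound_powr_sublinear:
  "0 < g \<Longrightarrow> g < 1 \<Longrightarrow> 0 < t \<Longrightarrow>
    eventually (\<lambda>x::real. (2 * ((x + 2) * (ln (x + 2))\<^sup>2) + 2) powr g \<le> t * x) at_top"
  by real_asymp

lemma exists_cf_bound_powr_le:
  fixes \<gamma> \<tau> :: real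
  assumes "0 \<le> \<gamma>" "\<gamma> < 1" "0 < \<tau>"
  shows "\<exists>c\<ge>0. \<forall>j::nat. (2 * (real (j + 2) * (ln (real (j + 2)))\<^sup>2) + 2) powr \<gamma> \<le> c + \<tau> * real j"
proof -
  define g where "g = max \<gamma> (1 / 2)"
  have g: "0 < g" "g < 1" "\<gamma> \<le> g" using assms by (auto simp: g_def)
  define \<Phi> where "\<Phi> x = 2 * ((x + 2) * (ln (x + 2))\<^sup>2) + 2" for x :: real
  have \<Phi>: "1 \<le> \<Phi> x" if "0 \<le> x" for x using that by (simp add: \<Phi>_def)
  have "eventually (\<lambda>j. \<Phi> (real j) powr g \<le> \<tau> * real j) sequentially"
    using cf_bound_powr_sublinear[OF g(1,2) assms(3)] filterlim_real_sequentially
    unfolding \<Phi>_def filterlim_iff by blast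
  then have "eventually (\<lambda>j. \<Phi> (real j) powr \<gamma> \<le> \<tau> * real j) sequentially"
    by eventually_elim (use \<Phi> g in \<open>auto intro: order_trans[OF powr_mono]\<close>)
  from exists_le_const_add_if_eventually_le[OF this] assms(3) show ?thesis
    by (simp add: \<Phi>_def add.commute)
qed

lemma cf_gap_half_le: "cf_gap (m - m div 2) \<le> 2 * exp (- (ln 2 / 4) * real m)"
proof -
  have "(exp (- ln 2 / 2))\<^sup>2 = exp (- ln (2 :: real))"
    by (simp add: power2_eq_square flip: exp_add)
  then have "(exp (- ln 2 / 2))\<^sup>2 = (1 / 2 :: real)" by (simp add: exp_minus)
  then have sqrt_half: "sqrt (1 / 2) = exp (- ln 2 / 2)"
    by (metis exp_ge_zero real_sqrt_unique)
  have "sqrt (1 / 2) ^ (m - m div 2) = exp (real (m - m div 2) * (- ln 2 / 2))"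
    by (simp only: sqrt_half exp_of_nat_mult)
  also have "\<dots> \<le> exp (- (ln 2 / 4) * real m)"
  proof -
    have "real m / 2 \<le> real (m - m div 2)" by linarith
    then have "(real m / 2) * (ln 2 / 2) \<le> real (m - m div 2) * (ln 2 / 2)"
      by (intro mult_right_mono) auto
    then show ?thesis by simp
  qed
  finally have "sqrt (1 / 2) ^ (m - m div 2) \<le> exp (- (ln 2 / 4) * real m)" .
  moreover have "1 / sqrt (1 / 2 :: real) \<le> 2"
    using real_sqrt_le_mono[of 2 4] by (simp add: real_sqrt_divide real_sqrt_four)
  ultimately have "sqrt (1 / 2) ^ (m - m div 2) * (1 / sqrt (1 / 2)) \<le> exp (- (ln 2 / 4) * real m) * 2"
    by (intro mult_mono) auto
  then show ?thesis by (simp add: cf_gap_def mult.commute)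
qed

lemma scaled_cf_gap_le:
  "cf_gap (m - m div 2) * (2 * real m powr (1 + d) + 2)
    \<le> 2 * (exp (- (ln 2 / 4) * real m) * (2 * real m powr (1 + d) + 2))"
proof -
  have "cf_gap (m - m div 2) * (2 * real m powr (1 + d) + 2)
      \<le> (2 * exp (- (ln 2 / 4) * real m)) * (2 * real m powr (1 + d) + 2)"
    by (rule mult_right_mono[OF cf_gap_half_le]) simp
  then show ?thesis by (simp only: mult.assoc)
qed

lemma exp_minus_power_half_le:
  fixes t :: real
  assumes "0 \<le> t"
  shows "exp (- t) ^ (m div 2) \<le> exp (t / 2) * exp (- (t / 2) * real m)"
proof -
  have "m \<le> 2 * (m div 2) + 1" by linarith
  then have "real m \<le> 2 * real (m div 2) + 1" by linarith
  then have "(real m - 1) / 2 \<le> real (m div 2)" by (simp add: field_simps)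
  then have "((real m - 1) / 2) * t \<le> real (m div 2) * t" using assms by (intro mult_right_mono)
  then have "real (m div 2) * (- t) \<le> t / 2 + (- (t / 2) * real m)" by (simp add: algebra_simps)
  then show ?thesis by (simp add: exp_of_nat_mult[symmetric] exp_add[symmetric])
qed

lemma affine_powr_powr_le:
  fixes x \<gamma> g d :: real
  assumes "1 \<le> x" "0 \<le> \<gamma>" "\<gamma> \<le> 1" "0 < d" "(1 + d) * \<gamma> \<le> g"
  shows "(8 * x powr (1 + d) + 8) powr \<gamma> \<le> 16 * x powr g"
proof -
  have "1 \<le> x powr (1 + d)" using assms by (simp add: ge_one_powr_ge_zero)
  then have "(8 * x powr (1 + d) + 8) powr \<gamma> \<le> (16 * x powr (1 + d)) powr \<gamma>"
    using assms by (intro powr_mono2) auto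
  also have "\<dots> = 16 powr \<gamma> * x powr ((1 + d) * \<gamma>)"
    using assms by (simp add: powr_mult powr_powr)
  also have "\<dots> \<le> 16 powr 1 * x powr g"
    using assms by (intro mult_mono powr_mono) auto
  finally show ?thesis by simp
qed

lemma tendsto_orbit_error_majorant:
  "0 < d \<Longrightarrow> 0 < g \<Longrightarrow> g < 1 \<Longrightarrow>
    ((\<lambda>x::real. x * (exp (- (ln 2 / 4) * x) * (2 * x powr (1 + d) + 2)) * exp (16 * x powr g))
      \<longlongrightarrow> 0) at_top"
  by real_asymp

lemma tendsto_gap_majorant:
  "0 < d \<Longrightarrow> ((\<lambda>x::real. exp (- (ln 2 / 4) * x) * (2 * x powr (1 + d) + 2)) \<longlongrightarrow> 0) at_top"
  by real_asymp

lemma tendsto_exp_sublinear: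
  "0 < t \<Longrightarrow> 0 < g \<Longrightarrow> g < 1 \<Longrightarrow> ((\<lambda>x::real. exp (- t * x) * exp (16 * x powr g)) \<longlongrightarrow> 0) at_top"
  by real_asymp

lemma tendsto_inverse_powr:
  "0 < d \<Longrightarrow> ((\<lambda>x::real. 1 / (8 * x powr (1 + d) + 8)) \<longlongrightarrow> 0) at_top"
  by real_asymp

lemma eventually_log_square_le_powr:
  "0 < d \<Longrightarrow> eventually (\<lambda>x::real. x * (ln x)\<^sup>2 \<le> x powr (1 + d)) at_top"
  by real_asymp

lemma tendsto_sequentially_of_at_top:
  "(g \<longlongrightarrow> 0) at_top \<Longrightarrow> (\<lambda>m. g (real m)) \<longlonglongrightarrow> 0"
  by (rule filterlim_compose[OF _ filterlim_real_sequentially])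

section \<open>The functional equation along the Gauss orbit\<close>

locale cf_cocycle =
  fixes k :: complex and f h :: "real \<Rightarrow> complex"
  assumes periodic: "\<And>x. x \<in> \<rat> \<Longrightarrow> x \<notin> {-1..0} \<Longrightarrow> f x = f (x + 1)"
    and cocycle: "\<And>x. x \<in> \<rat> \<Longrightarrow> x \<noteq> 0 \<Longrightarrow> \<bar>x\<bar> \<le> 1 \<Longrightarrow>
      h x = f x - complex_of_real \<bar>x\<bar> powr (- k) * f (-1 / x)"
begin

lemma f_sign_add_nat:
  assumes "\<bar>s\<bar> = 1" "y \<in> \<rat>" "0 < y"
  shows "f (s * (y + real n)) = f (s * y)"
proof (induction n)
  case (Suc n)
  have "y + real n \<in> \<rat>" "y + real (Suc n) \<in> \<rat>" using assms(2) by simp_all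
  consider "s = 1" | "s = -1" using assms(1) by linarith
  then have "f (s * (y + real (Suc n))) = f (s * (y + real n))"
  proof cases
    case 1
    have "f (y + real n) = f (y + real n + 1)"
      using \<open>y + real n \<in> \<rat>\<close> \<open>0 < y\<close> by (intro periodic) auto
    moreover have "y + real (Suc n) = y + real n + 1" by simp
    ultimately show ?thesis using 1 by (simp only: mult_1_left)
  next
    case 2
    have "- (y + real (Suc n)) \<in> \<rat>" using \<open>y + real (Suc n) \<in> \<rat>\<close> by (simp only: Rats_minus_iff)
    then have "f (- (y + real (Suc n))) = f (- (y + real (Suc n)) + 1)"
      by (rule periodic) (use \<open>0 < y\<close> in auto)
    also have "- (y + real (Suc n)) + 1 = - (y + real n)" by simp
    finally show ?thesis using 2 by simp
  qed
  then show ?case using Suc.IH by simp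
qed simp

lemma f_sign_of_int_add:
  assumes "\<bar>s\<bar> = 1" "t \<in> \<rat>" "0 \<le> t" "1 \<le> b"
  shows "f (s * (of_int b + t)) = f (s * (if t = 0 then 1 else t))"
proof (cases "t = 0")
  case True
  have "f (s * (of_int b + t)) = f (s * (1 + real (nat (b - 1))))"
    using True \<open>1 \<le> b\<close> by simp
  also have "\<dots> = f (s * 1)"
    by (rule f_sign_add_nat[OF assms(1)]) simp_all
  finally show ?thesis using True by simp
next
  case False
  have "f (s * (of_int b + t)) = f (s * (t + real (nat b)))"
    using \<open>1 \<le> b\<close> by (simp add: add.commute)
  also have "\<dots> = f (s * t)"
    by (rule f_sign_add_nat[OF assms(1,2)]) (use False \<open>0 \<le> t\<close> in simp)
  finally show ?thesis using False by simp
qed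

definition f_orbit :: "real \<Rightarrow> real \<Rightarrow> nat \<Rightarrow> complex" where
  "f_orbit s y j = f (s * (-1) ^ j * (if cf_rem y j = 0 then 1 else cf_rem y j))"

lemma f_eq_f_orbit:
  assumes "x \<in> \<rat>" "x \<notin> \<int>"
  shows "f x = f_orbit (sgn x) \<bar>x\<bar> 0"
proof -
  have "x \<noteq> 0" using assms(2) by auto
  then have s: "\<bar>sgn x\<bar> = 1" by (simp add: abs_sgn_eq)
  have "\<bar>x\<bar> \<notin> \<int>" "\<bar>x\<bar> \<in> \<rat>" using assms by (simp_all add: abs_if)
  then have "frac \<bar>x\<bar> \<in> \<rat>" "0 < frac \<bar>x\<bar>" by (simp add: frac_def, simp)
  have "x = sgn x * (frac \<bar>x\<bar> + real (nat \<lfloor>\<bar>x\<bar>\<rfloor>))"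
    by (simp add: frac_def mult_sgn_abs)
  then have "f x = f (sgn x * frac \<bar>x\<bar>)"
    using f_sign_add_nat[OF s \<open>frac \<bar>x\<bar> \<in> \<rat>\<close> \<open>0 < frac \<bar>x\<bar>\<close>] by metis
  then show ?thesis using \<open>0 < frac \<bar>x\<bar>\<close> by (simp add: f_orbit_def)
qed

lemma f_orbit_Suc:
  assumes "y \<in> \<rat>" "\<bar>s\<bar> = 1" and nz: "cf_rem y j \<noteq> 0"
  shows "f_orbit s y j
    = h (s * (-1) ^ j * cf_rem y j) + complex_of_real (cf_rem y j) powr (- k) * f_orbit s y (Suc j)"
proof -
  define t b t' where "t = cf_rem y j" and "b = cf_digit (Suc j) y" and "t' = cf_rem y (Suc j)"
  define \<sigma> where "\<sigma> = s * (-1) ^ j"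
  have "s = 1 \<or> s = -1" using \<open>\<bar>s\<bar> = 1\<close> by linarith
  then have \<sigma>: "\<sigma> = 1 \<or> \<sigma> = -1" by (auto simp: \<sigma>_def minus_one_power_iff)
  then have \<sigma>': "\<bar>- \<sigma>\<bar> = 1" "\<sigma> \<in> \<rat>" by auto
  have t: "0 < t" "t \<le> 1" "t \<in> \<rat>"
    using nz cf_rem_Rats[OF assms(1)] by (auto simp: t_def order_le_neq_trans intro: less_imp_le)
  have "t' \<in> \<rat>" "1 \<le> b" using cf_rem_Rats[OF assms(1)] cf_digit_Suc_ge_1[OF nz]
    by (simp_all add: t'_def b_def)
  have X: "\<sigma> * t \<in> \<rat>" "\<sigma> * t \<noteq> 0" "\<bar>\<sigma> * t\<bar> = t"
    using \<sigma> \<sigma>' t by auto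
  have "1 / t = b + t'"
    using cf_rem_eq_inverse[OF nz] by (simp add: t_def b_def t'_def)
  moreover have "-1 / (\<sigma> * t) = - \<sigma> * (1 / t)"
    using \<sigma> by (elim disjE) simp_all
  ultimately have "-1 / (\<sigma> * t) = - \<sigma> * (b + t')" by simp
  then have "f (-1 / (\<sigma> * t)) = f_orbit s y (Suc j)"
    using f_sign_of_int_add[OF \<sigma>'(1) \<open>t' \<in> \<rat>\<close> _ \<open>1 \<le> b\<close>] by (simp add: f_orbit_def \<sigma>_def t'_def)
  moreover have "f_orbit s y j = f (\<sigma> * t)" using nz by (simp add: f_orbit_def \<sigma>_def t_def)
  ultimately show ?thesis
    using cocycle[OF X(1,2)] t(1,2) unfolding X(3) by (simp add: \<sigma>_def t_def)
qed

lemma norm_f_orbit_end: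
  assumes "\<bar>s\<bar> = 1" "cf_rem y n = 0"
  shows "norm (f_orbit s y n) \<le> norm (f 1) + norm (f (-1))"
proof -
  have "s = 1 \<or> s = -1" using assms(1) by linarith
  then have "s * (-1) ^ n = 1 \<or> s * (-1) ^ n = -1"
    by (auto simp: minus_one_power_iff)
  then have "f_orbit s y n = f 1 \<or> f_orbit s y n = f (-1)"
    using assms(2) by (auto simp: f_orbit_def)
  then show ?thesis by (elim disjE) simp_all
qed

end

section \<open>Estimates along the orbit\<close>

locale cf_cocycle_growth = cf_cocycle +
  fixes \<delta> :: real
  assumes Re_k_neg: "Re k < 0" and delta_pos: "0 < \<delta>"
    and h_growth: "\<exists>C. \<forall>x. x \<noteq> 0 \<and> \<bar>x\<bar> \<le> 1 \<longrightarrow> norm (h x) \<le> C * exp (\<bar>x\<bar> powr (\<delta> - 1))"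
begin

text \<open>\<open>\<tau>\<close> is chosen so that \<open>\<parallel>u\<^sup>-\<^sup>k\<parallel> \<parallel>v\<^sup>-\<^sup>k\<parallel> \<le> 2\<^sup>R\<^sup>e \<^sup>k = e\<^sup>-\<^sup>4\<^sup>\<tau>\<close> for consecutive remainders \<open>u, v\<close>.\<close>

definition \<tau> :: real where "\<tau> = - Re k * ln 2 / 4"

definition \<gamma> :: real where "\<gamma> = max 0 (1 - \<delta>)"

definition C_h :: real where
  "C_h = max 0 (SOME C. \<forall>x. x \<noteq> 0 \<and> \<bar>x\<bar> \<le> 1 \<longrightarrow> norm (h x) \<le> C * exp (\<bar>x\<bar> powr (\<delta> - 1)))"

definition c_dig :: real where
  "c_dig = (SOME c. 0 \<le> c \<and>
     (\<forall>j::nat. (2 * (real (j + 2) * (ln (real (j + 2)))\<^sup>2) + 2) powr \<gamma> \<le> c + \<tau> * real j))"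

definition f_end :: real where "f_end = norm (f 1) + norm (f (-1))"

definition orbit_amp :: real where
  "orbit_amp = (C_h * exp c_dig * (1 + exp \<tau>) + f_end) / (1 - exp (- 2 * \<tau>))"

definition orbit_const :: "real \<Rightarrow> real" where
  "orbit_const B = orbit_amp * exp ((2 * B + 2) powr \<gamma>)"

lemma tau_pos: "0 < \<tau>"
  using Re_k_neg by (simp add: \<tau>_def mult_neg_pos)

lemma gamma_bounds: "0 \<le> \<gamma>" "\<gamma> < 1"
  using delta_pos by (auto simp: \<gamma>_def)

lemma C_h: "0 \<le> C_h" "\<And>x. x \<noteq> 0 \<Longrightarrow> \<bar>x\<bar> \<le> 1 \<Longrightarrow> norm (h x) \<le> C_h * exp (\<bar>x\<bar> powr (\<delta> - 1))"
proof -
  define P where "P C \<longleftrightarrow> (\<forall>x. x \<noteq> 0 \<and> \<bar>x\<bar> \<le> 1 \<longrightarrow> norm (h x) \<le> C * exp (\<bar>x\<bar> powr (\<delta> - 1)))"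
    for C
  have "P (SOME C. P C)" using h_growth someI_ex[of P] unfolding P_def by blast
  moreover have C_h_eq: "C_h = max 0 (SOME C. P C)" unfolding C_h_def P_def by simp
  ultimately show "0 \<le> C_h" "\<And>x. x \<noteq> 0 \<Longrightarrow> \<bar>x\<bar> \<le> 1 \<Longrightarrow> norm (h x) \<le> C_h * exp (\<bar>x\<bar> powr (\<delta> - 1))"
    unfolding P_def by (auto intro: order_trans[OF _ mult_right_mono])
qed

lemma c_dig: "0 \<le> c_dig" "\<And>j. (2 * (real (j + 2) * (ln (real (j + 2)))\<^sup>2) + 2) powr \<gamma> \<le> c_dig + \<tau> * real j"
  using someI_ex[OF exists_cf_bound_powr_le[OF gamma_bounds tau_pos]] unfolding c_dig_def by blast+

lemma orbit_amp_nonneg: "0 \<le> orbit_amp"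
  using tau_pos C_h(1) c_dig(1) by (auto simp: orbit_amp_def f_end_def)

lemma orbit_const_nonneg: "0 \<le> orbit_const B"
  using orbit_amp_nonneg by (simp add: orbit_const_def)

lemma norm_powr_le_1:
  assumes "0 < u" "u \<le> 1"
  shows "norm (complex_of_real u powr (- k)) \<le> 1"
proof -
  have "u powr (- Re k) \<le> 1 powr (- Re k)" using assms Re_k_neg by (intro powr_mono2) auto
  then show ?thesis using assms by (simp add: norm_of_real_powr_minus)
qed

lemma norm_powr_mult_le:
  assumes "0 < u" "0 < v" "u * v \<le> 1 / 2"
  shows "norm (complex_of_real u powr (- k)) * norm (complex_of_real v powr (- k)) \<le> exp (- 4 * \<tau>)"
proof -
  have "norm (complex_of_real u powr (- k)) * norm (complex_of_real v powr (- k)) = (u * v) powr (- Re k)"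
    using assms by (simp add: norm_of_real_powr_minus powr_mult)
  also have "\<dots> \<le> (1 / 2) powr (- Re k)" using assms Re_k_neg by (intro powr_mono2) auto
  also have "(1 / 2 :: real) powr (- Re k) = exp (- 4 * \<tau>)" by (simp add: powr_def \<tau>_def ln_div)
  finally show ?thesis .
qed

text \<open>The digit bound enters only through \<open>u\<^sup>\<delta>\<^sup>-\<^sup>1 \<le> (2 cf_bound B (j+2) + 2)\<^sup>\<gamma>\<close>, whose part
  coming from \<open>j log\<^sup>2 j\<close> is subexponential and absorbed in \<open>e\<^sup>\<tau>\<^sup>j\<close>.\<close>

lemma norm_h_le:
  assumes "0 \<le> B" "0 < u" "u \<le> 1" "1 / (2 * cf_bound B (j + 2) + 2) \<le> u" "\<bar>s\<bar> = 1"
  shows "norm (h (s * u)) \<le> C_h * exp c_dig * exp ((2 * B + 2) powr \<gamma>) * exp \<tau> ^ j"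
proof -
  define Y where "Y = 2 * (real (j + 2) * (ln (real (j + 2)))\<^sup>2) + 2"
  have "0 < Y" unfolding Y_def by (simp add: add_nonneg_pos)
  have M: "2 * cf_bound B (j + 2) + 2 = max (2 * B + 2) Y"
    by (simp add: cf_bound_def Y_def max_def)
  have "norm (h (s * u)) \<le> C_h * exp (u powr (\<delta> - 1))"
    using C_h(2)[of "s * u"] assms by (simp add: abs_mult)
  also have "u powr (\<delta> - 1) \<le> max (2 * B + 2) Y powr \<gamma>"
    unfolding \<gamma>_def M[symmetric]
    by (rule powr_le_powr_inverse_bound) (use assms in \<open>auto simp: cf_bound_def\<close>)
  also have "\<dots> \<le> (2 * B + 2) powr \<gamma> + Y powr \<gamma>"
    by (rule max_powr_le_add) (use assms \<open>0 < Y\<close> gamma_bounds in auto)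
  also have "Y powr \<gamma> \<le> c_dig + \<tau> * real j" unfolding Y_def by (rule c_dig(2))
  finally have "norm (h (s * u)) \<le> C_h * exp ((2 * B + 2) powr \<gamma> + (c_dig + \<tau> * real j))"
    using C_h(1) by (simp add: mult_left_mono)
  also have "\<dots> = C_h * exp c_dig * exp ((2 * B + 2) powr \<gamma>) * exp \<tau> ^ j"
    by (simp add: exp_add exp_of_nat_mult[symmetric] mult_ac)
  finally show ?thesis .
qed

lemma norm_cf_rem_powr_le_1: "norm (complex_of_real (cf_rem y i) powr (- k)) \<le> 1"
proof (cases "cf_rem y i = 0")
  case False
  then show ?thesis by (intro norm_powr_le_1) (simp_all add: order_le_neq_trans less_imp_le)
qed simp

lemma norm_cf_rem_powr_mult_le:
  "norm (complex_of_real (cf_rem y i) powr (- k)) * norm (complex_of_real (cf_rem y (Suc i)) powr (- k))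
    \<le> exp (- 4 * \<tau>)"
proof (cases "cf_rem y i = 0 \<or> cf_rem y (Suc i) = 0")
  case False
  then show ?thesis
    using cf_rem_mult_Suc_le_half[of y i] by (intro norm_powr_mult_le) (auto simp: order_le_neq_trans)
qed auto

lemma norm_prod_cf_rem_powr_le:
  "norm (\<Prod>i<j. complex_of_real (cf_rem y i) powr (- k)) \<le> exp (2 * \<tau>) * exp (- 2 * \<tau>) ^ j"
proof -
  have "exp (- 4 * \<tau>) = (exp (- 2 * \<tau>))\<^sup>2" by (simp add: power2_eq_square flip: exp_add)
  then have sq: "sqrt (exp (- 4 * \<tau>)) = exp (- 2 * \<tau>)" by simp
  have "norm (\<Prod>i<j. complex_of_real (cf_rem y i) powr (- k))
      \<le> sqrt (exp (- 4 * \<tau>)) ^ j / sqrt (exp (- 4 * \<tau>))"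
    by (rule norm_prod_le_sqrt_power[where n = j])
      (use norm_cf_rem_powr_le_1 norm_cf_rem_powr_mult_le tau_pos in auto)
  also have "\<dots> = exp (2 * \<tau>) * exp (- 2 * \<tau>) ^ j"
    unfolding sq by (simp add: exp_minus field_simps)
  finally show ?thesis .
qed

lemma norm_f_orbit_le:
  assumes "y \<in> \<rat>" "\<bar>s\<bar> = 1" "0 \<le> B" and lower: "cf_rem_bounded_below B y"
    and nz: "\<And>i. i < j \<Longrightarrow> cf_rem y i \<noteq> 0"
  shows "norm (f_orbit s y j) \<le> orbit_const B * exp \<tau> ^ j"
proof -
  obtain n where n: "cf_rem y n = 0" "\<And>i. i < n \<Longrightarrow> cf_rem y i \<noteq> 0"
    using cf_rem_Rats_obtain_length[OF assms(1)] by blast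
  then have "j \<le> n" using nz by (meson not_le)
  define K F where "K = C_h * exp c_dig * exp ((2 * B + 2) powr \<gamma>)"
    and "F = f_end * exp ((2 * B + 2) powr \<gamma>)"
  have "norm (f_orbit s y j) \<le> (K * (1 + exp \<tau>) + F) / (1 - exp (- 2 * \<tau>)) * exp \<tau> ^ j"
  proof (rule recurrence_norm_le[where H = "\<lambda>i. h (s * (-1) ^ i * cf_rem y i)"
        and c = "\<lambda>i. complex_of_real (cf_rem y i) powr (- k)" and q = "exp (- 4 * \<tau>)"])
    show "f_orbit s y i = h (s * (-1) ^ i * cf_rem y i)
        + complex_of_real (cf_rem y i) powr (- k) * f_orbit s y (Suc i)" if "i < n" for i
      using f_orbit_Suc[OF assms(1,2) n(2)[OF that]] .
    show "norm (h (s * (-1) ^ i * cf_rem y i)) \<le> K * exp \<tau> ^ i" if "i < n" for i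
      using norm_h_le[OF \<open>0 \<le> B\<close>, of "cf_rem y i" i "s * (-1) ^ i"] lower n(2)[OF that] \<open>\<bar>s\<bar> = 1\<close>
      by (auto simp: K_def cf_rem_bounded_below_def abs_mult order_le_neq_trans less_imp_le mult.assoc)
    have "f_end * 1 \<le> F" unfolding F_def by (intro mult_left_mono) (auto simp: f_end_def)
    then show "norm (f_orbit s y n) \<le> F"
      using norm_f_orbit_end[OF assms(2) n(1)] by (simp add: f_end_def)
    show "exp (- 4 * \<tau>) * (exp \<tau>)\<^sup>2 \<le> exp (- 2 * \<tau>)"
      by (simp add: power2_eq_square flip: exp_add)
  qed (use norm_cf_rem_powr_le_1 norm_cf_rem_powr_mult_le tau_pos C_h(1) \<open>j \<le> n\<close>
      in \<open>auto simp: K_def F_def f_end_def\<close>)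
  also have "(K * (1 + exp \<tau>) + F) / (1 - exp (- 2 * \<tau>)) = orbit_const B"
    by (simp add: K_def F_def orbit_const_def orbit_amp_def algebra_simps)
  finally show ?thesis .
qed

lemma norm_f_orbit_diff_le:
  assumes y: "y1 \<in> \<rat>" "y2 \<in> \<rat>" and s: "\<bar>s\<bar> = 1" and "0 \<le> B"
    and lower: "cf_rem_bounded_below B y1" "cf_rem_bounded_below B y2"
    and nz: "\<And>j. j < N \<Longrightarrow> cf_rem y1 j \<noteq> 0 \<and> cf_rem y2 j \<noteq> 0"
    and bound: "cf_bound B (N + 1) \<le> B"
    and close: "\<And>j. j < N \<Longrightarrow> \<bar>cf_rem y1 j - cf_rem y2 j\<bar> \<le> d" "0 \<le> d"
    and h_close: "\<And>j. j < N \<Longrightarrow>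
      norm (h (s * (-1) ^ j * cf_rem y1 j) - h (s * (-1) ^ j * cf_rem y2 j)) \<le> \<eta>" "0 \<le> \<eta>"
  shows "norm (f_orbit s y1 0 - f_orbit s y2 0)
    \<le> exp (2 * \<tau>) * (\<eta> / (1 - exp (- 2 * \<tau>))
        + N * (norm k * (d * (2 * B + 2)) * exp (norm k * (d * (2 * B + 2)))) * orbit_const B * exp \<tau>)
      + exp (2 * \<tau>) * exp (- \<tau>) ^ N * (2 * orbit_const B)"
proof -
  have lb: "1 / (2 * B + 2) \<le> cf_rem y1 j" "1 / (2 * B + 2) \<le> cf_rem y2 j" if "j < N" for j
    using cf_rem_bounded_below_ge[OF lower(1)] cf_rem_bounded_below_ge[OF lower(2)] nz[OF that]
      cf_bound_mono[of "j + 2" "N + 1" B] bound that \<open>0 \<le> B\<close> by auto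
  have "exp (- 2 * \<tau>) * exp \<tau> = exp (- \<tau>)" by (simp flip: exp_add)
  moreover have "norm (f_orbit s y1 0 - f_orbit s y2 0)
    \<le> exp (2 * \<tau>) * (\<eta> / (1 - exp (- 2 * \<tau>))
        + N * (norm k * (d * (2 * B + 2)) * exp (norm k * (d * (2 * B + 2)))) * orbit_const B * exp \<tau>)
      + exp (2 * \<tau>) * (exp (- 2 * \<tau>) * exp \<tau>) ^ N * (2 * orbit_const B)"
  proof (rule recurrence_diff_norm_le)
    show "f_orbit s y1 j = h (s * (-1) ^ j * cf_rem y1 j)
        + complex_of_real (cf_rem y1 j) powr (- k) * f_orbit s y1 (Suc j)"
      "f_orbit s y2 j = h (s * (-1) ^ j * cf_rem y2 j)
        + complex_of_real (cf_rem y2 j) powr (- k) * f_orbit s y2 (Suc j)" if "j < N" for j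
      using f_orbit_Suc[OF y(1) s] f_orbit_Suc[OF y(2) s] nz[OF that] by auto
    show "norm (complex_of_real (cf_rem y1 j) powr (- k) - complex_of_real (cf_rem y2 j) powr (- k))
        \<le> norm k * (d * (2 * B + 2)) * exp (norm k * (d * (2 * B + 2)))" if "j < N" for j
      using norm_of_real_powr_diff_le_scaled[OF Re_k_neg \<open>0 \<le> B\<close> lb[OF that]] close(1)[OF that]
      by (simp add: less_imp_le)
    show "norm (f_orbit s y1 j) \<le> orbit_const B * exp \<tau> ^ j"
      "norm (f_orbit s y2 j) \<le> orbit_const B * exp \<tau> ^ j" if "j \<le> N" for j
      using norm_f_orbit_le[OF y(1) s \<open>0 \<le> B\<close> lower(1)] norm_f_orbit_le[OF y(2) s \<open>0 \<le> B\<close> lower(2)]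
        nz that by auto
    show "0 \<le> orbit_const B" by (rule orbit_const_nonneg)
    show "exp (- 2 * \<tau>) * exp \<tau> \<le> 1" using tau_pos by (simp flip: exp_add)
  qed (use h_close norm_prod_cf_rem_powr_le tau_pos \<open>0 \<le> d\<close> \<open>0 \<le> B\<close> in auto)
  ultimately show ?thesis by simp
qed

text \<open>\<open>\<beta> < 1\<close> makes \<open>exp ((8 m\<^sup>1\<^sup>+\<^sup>\<delta> + 8)\<^sup>\<gamma>)\<close>, which bounds both the orbit constant and
  \<open>exp (\<epsilon>\<^sup>\<delta>\<^sup>-\<^sup>1)\<close> at scale \<open>\<epsilon> \<approx> m\<^sup>-\<^sup>1\<^sup>-\<^sup>\<delta>\<close>, subexponential in \<open>m\<close>.\<close>

definition \<beta> :: real where "\<beta> = max ((1 + \<delta>) * \<gamma>) (1 / 2)"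

lemma beta_bounds: "0 < \<beta>" "\<beta> < 1"
proof -
  have "(1 + \<delta>) * \<gamma> < 1"
  proof (cases "1 \<le> \<delta>")
    case False
    then have "(1 + \<delta>) * \<gamma> = 1 - \<delta>\<^sup>2" by (simp add: \<gamma>_def power2_eq_square algebra_simps)
    then show ?thesis using delta_pos by simp
  qed (simp add: \<gamma>_def)
  then show "0 < \<beta>" "\<beta> < 1" by (auto simp: \<beta>_def)
qed

lemma powr_gamma_le_beta:
  assumes "1 \<le> x"
  shows "(8 * x powr (1 + \<delta>) + 8) powr \<gamma> \<le> 16 * x powr \<beta>"
  using assms gamma_bounds delta_pos by (intro affine_powr_powr_le) (auto simp: \<beta>_def)

lemma orbit_const_le:
  assumes "1 \<le> x"
  shows "orbit_const (x powr (1 + \<delta>)) \<le> orbit_amp * exp (16 * x powr \<beta>)"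
proof -
  have "(2 * x powr (1 + \<delta>) + 2) powr \<gamma> \<le> (8 * x powr (1 + \<delta>) + 8) powr \<gamma>"
    using gamma_bounds by (intro powr_mono2) auto
  then show ?thesis
    using powr_gamma_le_beta[OF assms] orbit_amp_nonneg
    by (auto simp: orbit_const_def intro: mult_left_mono)
qed

lemma scale_powr_le_beta:
  assumes "1 \<le> x"
  shows "(1 / (8 * x powr (1 + \<delta>) + 8)) powr (\<delta> - 1) \<le> 16 * x powr \<beta>"
proof -
  define M where "M = 8 * x powr (1 + \<delta>) + 8"
  have "1 \<le> M" by (simp add: M_def)
  then have "(1 / M) powr (\<delta> - 1) \<le> M powr \<gamma>"
    unfolding \<gamma>_def by (intro powr_le_powr_inverse_bound) auto
  then have "(1 / (8 * x powr (1 + \<delta>) + 8)) powr (\<delta> - 1) \<le> (8 * x powr (1 + \<delta>) + 8) powr \<gamma>"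
    by (simp add: M_def)
  also have "\<dots> \<le> 16 * x powr \<beta>" by (rule powr_gamma_le_beta[OF assms])
  finally show ?thesis .
qed

definition f_err :: "nat \<Rightarrow> real \<Rightarrow> real" where
  "f_err m B = exp (2 * \<tau>) * (real (m div 2)
      * (norm k * (cf_gap (m - m div 2) * (2 * B + 2)) * exp (norm k * (cf_gap (m - m div 2) * (2 * B + 2))))
      * orbit_const B * exp \<tau>)
    + exp (2 * \<tau>) * exp (- \<tau>) ^ (m div 2) * (2 * orbit_const B)"

lemma tendsto_scaled_gap: "(\<lambda>m. cf_gap (m - m div 2) * (2 * real m powr (1 + \<delta>) + 2)) \<longlonglongrightarrow> 0"
proof (rule Lim_null_comparison)
  show "\<forall>\<^sub>F m in sequentially. norm (cf_gap (m - m div 2) * (2 * real m powr (1 + \<delta>) + 2))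
      \<le> 2 * (exp (- (ln 2 / 4) * real m) * (2 * real m powr (1 + \<delta>) + 2))"
  proof (intro always_eventually allI)
    fix m
    show "norm (cf_gap (m - m div 2) * (2 * real m powr (1 + \<delta>) + 2))
        \<le> 2 * (exp (- (ln 2 / 4) * real m) * (2 * real m powr (1 + \<delta>) + 2))"
      using scaled_cf_gap_le[of m \<delta>] by (simp add: abs_mult)
  qed
  show "(\<lambda>m. 2 * (exp (- (ln 2 / 4) * real m) * (2 * real m powr (1 + \<delta>) + 2))) \<longlonglongrightarrow> 0"
    using tendsto_sequentially_of_at_top[OF tendsto_gap_majorant[OF delta_pos]]
    by (intro tendsto_mult_right_zero)
qed

lemma tendsto_scaled_gap_orbit_const:
  "(\<lambda>m. real (m div 2) * (cf_gap (m - m div 2) * (2 * real m powr (1 + \<delta>) + 2))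
      * orbit_const (real m powr (1 + \<delta>))) \<longlonglongrightarrow> 0"
proof (rule Lim_null_comparison)
  show "\<forall>\<^sub>F m in sequentially. norm (real (m div 2) * (cf_gap (m - m div 2) * (2 * real m powr (1 + \<delta>) + 2))
      * orbit_const (real m powr (1 + \<delta>)))
    \<le> 2 * orbit_amp * (real m * (exp (- (ln 2 / 4) * real m) * (2 * real m powr (1 + \<delta>) + 2))
      * exp (16 * real m powr \<beta>))"
    using eventually_ge_at_top[of 1]
  proof eventually_elim
    case (elim m)
    have "real (m div 2) * (cf_gap (m - m div 2) * (2 * real m powr (1 + \<delta>) + 2))
        \<le> real m * (2 * (exp (- (ln 2 / 4) * real m) * (2 * real m powr (1 + \<delta>) + 2)))"
      by (rule mult_mono[OF _ scaled_cf_gap_le]) auto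
    then have "real (m div 2) * (cf_gap (m - m div 2) * (2 * real m powr (1 + \<delta>) + 2))
        * orbit_const (real m powr (1 + \<delta>))
      \<le> real m * (2 * (exp (- (ln 2 / 4) * real m) * (2 * real m powr (1 + \<delta>) + 2)))
        * (orbit_amp * exp (16 * real m powr \<beta>))"
      by (rule mult_mono) (use orbit_const_le[of "real m"] orbit_const_nonneg elim in auto)
    then show ?case using orbit_const_nonneg[of "real m powr (1 + \<delta>)"] by (simp add: abs_mult mult_ac)
  qed
  show "(\<lambda>m. 2 * orbit_amp * (real m * (exp (- (ln 2 / 4) * real m) * (2 * real m powr (1 + \<delta>) + 2))
      * exp (16 * real m powr \<beta>))) \<longlonglongrightarrow> 0"
    using tendsto_sequentially_of_at_top[OF tendsto_orbit_error_majorant[OF delta_pos beta_bounds]]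
    by (intro tendsto_mult_right_zero)
qed

lemma tendsto_decay_orbit_const:
  "(\<lambda>m. exp (- \<tau>) ^ (m div 2) * orbit_const (real m powr (1 + \<delta>))) \<longlonglongrightarrow> 0"
proof (rule Lim_null_comparison)
  show "\<forall>\<^sub>F m in sequentially. norm (exp (- \<tau>) ^ (m div 2) * orbit_const (real m powr (1 + \<delta>)))
      \<le> exp (\<tau> / 2) * orbit_amp * (exp (- (\<tau> / 2) * real m) * exp (16 * real m powr \<beta>))"
    using eventually_ge_at_top[of 1]
  proof eventually_elim
    case (elim m)
    have "exp (- \<tau>) ^ (m div 2) * orbit_const (real m powr (1 + \<delta>))
        \<le> (exp (\<tau> / 2) * exp (- (\<tau> / 2) * real m)) * (orbit_amp * exp (16 * real m powr \<beta>))"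
      by (rule mult_mono)
        (use exp_minus_power_half_le[of \<tau> m] orbit_const_le[of "real m"] orbit_const_nonneg elim
          tau_pos in auto)
    then show ?case using orbit_const_nonneg[of "real m powr (1 + \<delta>)"] by (simp add: abs_mult mult_ac)
  qed
  show "(\<lambda>m. exp (\<tau> / 2) * orbit_amp * (exp (- (\<tau> / 2) * real m) * exp (16 * real m powr \<beta>)))
      \<longlonglongrightarrow> 0"
    using tendsto_sequentially_of_at_top[OF tendsto_exp_sublinear[of "\<tau> / 2"]] tau_pos beta_bounds
    by (intro tendsto_mult_right_zero) auto
qed

lemma f_err_tendsto_0: "(\<lambda>m. f_err m (real m powr (1 + \<delta>))) \<longlonglongrightarrow> 0"
proof -
  define X where "X m = cf_gap (m - m div 2) * (2 * real m powr (1 + \<delta>) + 2)" for m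
  define Z where "Z m = orbit_const (real m powr (1 + \<delta>))" for m
  have "(\<lambda>m. exp (2 * \<tau>) * exp \<tau> * norm k * (real (m div 2) * X m * Z m) * exp (norm k * X m)
      + 2 * exp (2 * \<tau>) * (exp (- \<tau>) ^ (m div 2) * Z m))
      \<longlonglongrightarrow> exp (2 * \<tau>) * exp \<tau> * norm k * 0 * exp (norm k * 0) + 2 * exp (2 * \<tau>) * 0"
    unfolding X_def Z_def
    by (intro tendsto_intros tendsto_scaled_gap tendsto_scaled_gap_orbit_const tendsto_decay_orbit_const)
  then show ?thesis
    by (simp add: f_err_def X_def Z_def mult_ac)
qed

lemma cfV_facts:
  assumes "x' \<in> cfV B m x"
  shows "x' \<in> \<rat>" "x' \<in> cfT B" "\<And>j. j < m \<Longrightarrow> cf_rem x' j \<noteq> 0"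
    "\<And>j. j \<le> m \<Longrightarrow> cf_digit j x' = cf_digit j x"
  using assms cf_rem_nonzero_if_less_cf_len by (auto simp: cfV_def)

lemma norm_f_diff_le:
  assumes "2 \<le> m" "0 \<le> B" and bound: "cf_bound B (m div 2 + 1) \<le> B"
    and x': "x' \<in> cfV B m x" and x'': "x'' \<in> cfV B m x" and "0 \<le> \<eta>"
    and window: "\<And>y z. y \<noteq> 0 \<Longrightarrow> z \<noteq> 0 \<Longrightarrow> \<bar>y - z\<bar> \<le> cf_gap (m - m div 2) \<Longrightarrow>
      1 / (2 * B + 2) \<le> \<bar>y\<bar> \<Longrightarrow> norm (h y - h z) \<le> \<eta>"
  shows "norm (f x' - f x'') \<le> exp (2 * \<tau>) * (\<eta> / (1 - exp (- 2 * \<tau>))) + f_err m B"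
proof -
  define N where "N = m div 2"
  note x'_facts = cfV_facts[OF x'] and x''_facts = cfV_facts[OF x'']
  have digits: "\<And>j. j \<le> m \<Longrightarrow> cf_digit j x' = cf_digit j x''"
    and nz: "\<And>j. j < m \<Longrightarrow> cf_rem x' j \<noteq> 0 \<and> cf_rem x'' j \<noteq> 0"
    using x'_facts(3,4) x''_facts(3,4) by simp_all
  then have "x' \<notin> \<int>" "x'' \<notin> \<int>" using \<open>2 \<le> m\<close> nz[of 0] by auto
  moreover have "sgn x'' = sgn x'"
    using sgn_eq_if_floor_eq[of x'' x'] digits[of 0] calculation by simp
  ultimately have f_eq: "f x' = f_orbit (sgn x') \<bar>x'\<bar> 0" "f x'' = f_orbit (sgn x') \<bar>x''\<bar> 0"
    using f_eq_f_orbit x'_facts(1) x''_facts(1) by metis+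
  have s: "\<bar>sgn x'\<bar> = 1" using \<open>x' \<notin> \<int>\<close> by (auto simp: abs_sgn_eq)
  have lower: "cf_rem_bounded_below B \<bar>x'\<bar>" "cf_rem_bounded_below B \<bar>x''\<bar>"
    using cf_rem_bounded_below_abs x'_facts(2) x''_facts(2) nz[of 1] \<open>2 \<le> m\<close> by auto
  have nz_abs: "cf_rem \<bar>x'\<bar> j \<noteq> 0 \<and> cf_rem \<bar>x''\<bar> j \<noteq> 0" if "j < N" for j
    using cf_rem_abs_nonzero[of m x' j] cf_rem_abs_nonzero[of m x'' j] nz that \<open>2 \<le> m\<close>
    by (auto simp: N_def)
  have close: "\<bar>cf_rem (\<bar>x'\<bar>) j - cf_rem (\<bar>x''\<bar>) j\<bar> \<le> cf_gap (m - N)" if "j < N" for j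
  proof -
    have "Suc j \<le> m" "m - N \<le> m - Suc j" using that by (auto simp: N_def)
    then show ?thesis
      using cf_rem_abs_diff_le[OF digits nz \<open>2 \<le> m\<close>, of j] cf_gap_antimono[of "m - N" "m - Suc j"]
      by simp
  qed
  have h_close: "norm (h (sgn x' * (-1) ^ j * cf_rem \<bar>x'\<bar> j) - h (sgn x' * (-1) ^ j * cf_rem \<bar>x''\<bar> j))
      \<le> \<eta>" if "j < N" for j
  proof (rule window)
    have "cf_bound B (j + 2) \<le> B"
      using cf_bound_mono[of "j + 2" "N + 1" B] bound that by (simp add: N_def)
    then show "1 / (2 * B + 2) \<le> \<bar>sgn x' * (-1) ^ j * cf_rem \<bar>x'\<bar> j\<bar>"
      using cf_rem_bounded_below_ge[OF lower(1)] nz_abs[OF that] s \<open>0 \<le> B\<close> by (simp add: abs_mult)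
  qed (use nz_abs[OF that] close[OF that] s in \<open>auto simp: abs_mult N_def sgn_0_0
      simp flip: right_diff_distrib\<close>)
  have "norm (f x' - f x'') \<le> exp (2 * \<tau>) * (\<eta> / (1 - exp (- 2 * \<tau>))
        + N * (norm k * (cf_gap (m - N) * (2 * B + 2)) * exp (norm k * (cf_gap (m - N) * (2 * B + 2))))
          * orbit_const B * exp \<tau>)
      + exp (2 * \<tau>) * exp (- \<tau>) ^ N * (2 * orbit_const B)"
    unfolding f_eq
    by (rule norm_f_orbit_diff_le[OF _ _ s \<open>0 \<le> B\<close> lower nz_abs _ close _ h_close])
      (use x'_facts(1) x''_facts(1) bound \<open>0 \<le> \<eta>\<close> in \<open>auto simp: N_def cf_gap_def\<close>)
  then show ?thesis by (simp add: f_err_def N_def distrib_left)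
qed

lemma eventually_window:
  assumes "0 < \<epsilon>\<^sub>0"
  shows "\<forall>\<^sub>F m in sequentially. 2 \<le> m
    \<and> cf_bound (real m powr (1 + \<delta>)) (m div 2 + 1) \<le> real m powr (1 + \<delta>)
    \<and> 1 / (8 * real m powr (1 + \<delta>) + 8) < \<epsilon>\<^sub>0
    \<and> cf_gap (m - m div 2) < exp (- ((1 / (8 * real m powr (1 + \<delta>) + 8)) powr (\<delta> - 1)))"
proof -
  have log: "\<forall>\<^sub>F m in sequentially. real m * (ln (real m))\<^sup>2 \<le> real m powr (1 + \<delta>)"
    using filterlim_iff[THEN iffD1, OF filterlim_real_sequentially, rule_format,
        OF eventually_log_square_le_powr[OF delta_pos]] by simp
  have small: "\<forall>\<^sub>F m in sequentially. 1 / (8 * real m powr (1 + \<delta>) + 8) < \<epsilon>\<^sub>0"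
    using order_tendstoD(2)[OF tendsto_sequentially_of_at_top[OF tendsto_inverse_powr[OF delta_pos]]
        assms] .
  have "((\<lambda>x. exp (- (ln 2 / 4) * x) * exp (16 * x powr \<beta>)) \<longlongrightarrow> 0) at_top"
    by (rule tendsto_exp_sublinear) (use beta_bounds in auto)
  from order_tendstoD(2)[OF tendsto_sequentially_of_at_top[OF this], of "1 / 2"]
  have gap: "\<forall>\<^sub>F m in sequentially. exp (- (ln 2 / 4) * real m) * exp (16 * real m powr \<beta>) < 1 / 2"
    by simp
  show ?thesis
    using log small gap eventually_ge_at_top[of 2]
  proof eventually_elim
    case (elim m)
    define B where "B = real m powr (1 + \<delta>)"
    have "cf_bound B (m div 2 + 1) \<le> cf_bound B m"
      using elim by (intro cf_bound_mono) linarith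
    also have "\<dots> = B" using elim by (simp add: cf_bound_def B_def)
    finally have bound: "cf_bound B (m div 2 + 1) \<le> B" .
    have "cf_gap (m - m div 2) * exp ((1 / (8 * B + 8)) powr (\<delta> - 1))
        \<le> cf_gap (m - m div 2) * exp (16 * real m powr \<beta>)"
      using scale_powr_le_beta[of "real m"] elim by (intro mult_left_mono) (simp_all add: cf_gap_def B_def)
    also have "\<dots> \<le> 2 * exp (- (ln 2 / 4) * real m) * exp (16 * real m powr \<beta>)"
      by (rule mult_right_mono[OF cf_gap_half_le]) simp
    also have "\<dots> < 1" using elim by (simp add: mult_ac)
    finally have "cf_gap (m - m div 2) < exp (- ((1 / (8 * B + 8)) powr (\<delta> - 1)))"
      by (simp add: exp_minus field_simps)
    then show ?case using elim bound by (simp add: B_def)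
  qed
qed

lemma h_diff_le_in_window:
  assumes h_close: "\<And>\<epsilon>. 0 < \<epsilon> \<Longrightarrow> \<epsilon> < \<epsilon>\<^sub>0 \<Longrightarrow> \<forall>x y. x \<noteq> 0 \<and> y \<noteq> 0 \<and>
      \<bar>x - y\<bar> < exp (- (\<epsilon> powr (\<delta> - 1))) \<and> \<bar>x\<bar> > 2 * \<epsilon> \<longrightarrow> norm (h x - h y) \<le> \<eta>"
    and "0 \<le> B" "1 / (8 * B + 8) < \<epsilon>\<^sub>0" "d < exp (- ((1 / (8 * B + 8)) powr (\<delta> - 1)))"
    and "y \<noteq> 0" "z \<noteq> 0" "\<bar>y - z\<bar> \<le> d" "1 / (2 * B + 2) \<le> \<bar>y\<bar>"
  shows "norm (h y - h z) \<le> \<eta>"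
proof -
  have "0 < 1 / (8 * B + 8)" using \<open>0 \<le> B\<close> by simp
  moreover have "2 * (1 / (8 * B + 8)) < \<bar>y\<bar>"
    using assms(8) \<open>0 \<le> B\<close> by (simp add: field_simps)
  moreover have "\<bar>y - z\<bar> < exp (- ((1 / (8 * B + 8)) powr (\<delta> - 1)))" using assms(4,7) by linarith
  ultimately show ?thesis using h_close[of "1 / (8 * B + 8)"] assms(3,5,6) by blast
qed

theorem propS_if_h_uniformly_continuous:
  assumes h_uniform: "\<And>\<eta>. \<eta> > 0 \<Longrightarrow> \<forall>\<^sub>F \<epsilon> in at_right 0. \<forall>x y. x \<noteq> 0 \<and> y \<noteq> 0 \<and>
    \<bar>x - y\<bar> < exp (- (\<epsilon> powr (\<delta> - 1))) \<and> \<bar>x\<bar> > 2 * \<epsilon> \<longrightarrow> norm (h x - h y) \<le> \<eta>"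
  shows "propS (1 + \<delta>) f"
  unfolding propS_def
proof (intro allI impI)
  fix e :: real
  assume "0 < e"
  define c where "c = exp (2 * \<tau>) / (1 - exp (- 2 * \<tau>))"
  have "0 < c" using tau_pos by (simp add: c_def)
  define \<eta> where "\<eta> = e / (2 * c)"
  have "0 < \<eta>" using \<open>0 < e\<close> \<open>0 < c\<close> by (simp add: \<eta>_def)
  obtain \<epsilon>\<^sub>0 where "0 < \<epsilon>\<^sub>0" and \<epsilon>\<^sub>0: "\<And>\<epsilon>. 0 < \<epsilon> \<Longrightarrow> \<epsilon> < \<epsilon>\<^sub>0 \<Longrightarrow> \<forall>x y. x \<noteq> 0 \<and> y \<noteq> 0 \<and>
      \<bar>x - y\<bar> < exp (- (\<epsilon> powr (\<delta> - 1))) \<and> \<bar>x\<bar> > 2 * \<epsilon> \<longrightarrow> norm (h x - h y) \<le> \<eta>"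
    using h_uniform[OF \<open>0 < \<eta>\<close>] unfolding eventually_at_right_field by auto
  have err: "\<forall>\<^sub>F m in sequentially. f_err m (real m powr (1 + \<delta>)) < e / 2"
    using order_tendstoD(2)[OF f_err_tendsto_0] \<open>0 < e\<close> half_gt_zero by blast
  show "\<forall>\<^sub>F m in sequentially. \<forall>x\<in>cfT (real m powr (1 + \<delta>)). \<forall>x'\<in>cfV (real m powr (1 + \<delta>)) m x.
      \<forall>x''\<in>cfV (real m powr (1 + \<delta>)) m x. norm (f x' - f x'') \<le> e"
    using eventually_window[OF \<open>0 < \<epsilon>\<^sub>0\<close>] err
  proof eventually_elim
    case (elim m)
    define B where "B = real m powr (1 + \<delta>)"
    have "0 \<le> B" by (simp add: B_def)
    have "1 / (8 * B + 8) < \<epsilon>\<^sub>0" "cf_gap (m - m div 2) < exp (- ((1 / (8 * B + 8)) powr (\<delta> - 1)))"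
      using elim by (simp_all add: B_def)
    note window = h_diff_le_in_window[OF \<epsilon>\<^sub>0 \<open>0 \<le> B\<close> this]
    show ?case
    proof (intro ballI)
      fix x x' x'' assume "x' \<in> cfV (real m powr (1 + \<delta>)) m x" "x'' \<in> cfV (real m powr (1 + \<delta>)) m x"
      then have "norm (f x' - f x'') \<le> c * \<eta> + f_err m B"
        using norm_f_diff_le[of m B x' x x'' \<eta>] window elim \<open>0 \<le> B\<close> \<open>0 < \<eta>\<close>
        by (simp add: B_def c_def)
      also have "\<dots> \<le> e" using elim \<open>0 < c\<close> by (simp add: \<eta>_def B_def)
      finally show "norm (f x' - f x'') \<le> e" .
    qed
  qed
qed

end

theorem lemma2p4:
  fixes k :: complex and \<delta> :: real and f h :: "real \<Rightarrow> complex"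
  assumes "Re k < 0" and "\<delta> > 0"
    and "\<And>x. x \<in> \<rat> \<Longrightarrow> x \<notin> {-1..0} \<Longrightarrow> f x = f (x + 1)"
    and "\<And>x. x \<in> \<rat> \<Longrightarrow> x \<noteq> 0 \<Longrightarrow> \<bar>x\<bar> \<le> 1 \<Longrightarrow>
           h x = f x - complex_of_real \<bar>x\<bar> powr (- k) * f (-1 / x)"
    and "\<And>\<eta>. \<eta> > 0 \<Longrightarrow> \<forall>\<^sub>F \<epsilon> in at_right 0. \<forall>x y. x \<noteq> 0 \<and> y \<noteq> 0 \<and>
           \<bar>x - y\<bar> < exp (- (\<epsilon> powr (\<delta> - 1))) \<and> \<bar>x\<bar> > 2 * \<epsilon> \<longrightarrow> norm (h x - h y) \<le> \<eta>"
    and "\<exists>C. \<forall>x. x \<noteq> 0 \<and> \<bar>x\<bar> \<le> 1 \<longrightarrow> norm (h x) \<le> C * exp (\<bar>x\<bar> powr (\<delta> - 1))"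
  shows "propS (1 + \<delta>) f"
proof -
  interpret cf_cocycle_growth k f h \<delta>
    by unfold_locales (fact assms)+
  show ?thesis by (rule propS_if_h_uniformly_continuous) (fact assms(5))
qed

end
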